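(* Let $G$ be a finite group with $\mathcal{D}(G)-\mathcal{D}(Z(G))=3$ and $\mathcal{D}(G/Z(G))=1$. Then $G=KH$ where $K\trianglelefteq G$ has prime order $p$, $H$ is a cyclic subgroup of order $q^2$ for a prime $q$ dividing $p-1$, $K\cap H=1$, and $C_H(K)=Z(G)$ has order $q$.
   Context: $\mathcal{D}(X)$ denotes the number of conjugacy classes of nontrivial subgroups $Y$ of the finite group $X$ with $N_X(Y)\neq Y$. $Z(G)$ is the center of $G$. *)

theory Defs
  imports "HOL-Algebra.Algebra"
begin

definition center :: "('a, 'b) monoid_scheme \<Rightarrow> 'a set" where
  "center G = {z \<in> carrier G. \<forall>g \<in> carrier G. z \<otimes>\<^bsub>G\<^esub> g = g \<otimes>\<^bsub>G\<^esub> z}"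

definition centralizer_in :: "('a, 'b) monoid_scheme \<Rightarrow> 'a set \<Rightarrow> 'a set \<Rightarrow> 'a set" where
  "centralizer_in G H K = {h \<in> H. \<forall>k \<in> K. h \<otimes>\<^bsub>G\<^esub> k = k \<otimes>\<^bsub>G\<^esub> h}"

definition conj_class :: "('a, 'b) monoid_scheme \<Rightarrow> 'a set \<Rightarrow> 'a set set" where
  "conj_class G Y = {g <#\<^bsub>G\<^esub> Y #>\<^bsub>G\<^esub> inv\<^bsub>G\<^esub> g | g. g \<in> carrier G}"

definition nsn_subgroups :: "('a, 'b) monoid_scheme \<Rightarrow> 'a set set" where
  "nsn_subgroups G = {Y. subgroup Y G \<and> Y \<noteq> {\<one>\<^bsub>G\<^esub>} \<and> normalizer G Y \<noteq> Y}"

definition DD :: "('a, 'b) monoid_scheme \<Rightarrow> nat" where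
  "DD G = card (conj_class G ` nsn_subgroups G)"

end

theory Submission
  imports Defs "HOL-Number_Theory.Residues"
begin

(* Write Z for the center. A nontrivial subgroup that is not self-normalizing lies in Z, or properly
   contains Z, or is incomparable with Z; subgroups of the last kind are never self-normalizing,
   as Z normalizes them. The subgroups inside Z are normal, so they give the D(Z) classes plus Z
   itself; those above Z correspond, compatibly with conjugation, to the subgroups counted by D(G/Z)
   and so form one class. Hence Z is nontrivial and the subgroups incomparable with Z form a single
   conjugacy class. Having a common order, each of them is generated by any of its noncentral
   elements. A Sylow argument then yields primes r and t with |Z| = t, |G| = r t^g and a subgroup K
   of order r incomparable with Z. Growth of normalizers in a Sylow t-subgroup R forces g = 2 and
   R cyclic; KZ cannot be self-normalizing (else R would be normal and K central), so KZ and then K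
   are normal. Finally a generator of R acts on K as an automorphism of order t, so t divides
   r - 1. *)

lemma prime_power_if_unique_prime_factor:
  fixes n t :: nat
  assumes n: "n > 0" and t: "Factorial_Ring.prime t"
    and all: "\<And>p. Factorial_Ring.prime p \<Longrightarrow> p dvd n \<Longrightarrow> p = t"
  shows "n = t ^ multiplicity t n"
proof (rule dvd_antisym)
  show "t ^ multiplicity t n dvd n" by (rule multiplicity_dvd)
  show "n dvd t ^ multiplicity t n"
  proof (rule multiplicity_le_imp_dvd)
    show "n \<noteq> 0" using n by simp
    fix p :: nat assume p: "Factorial_Ring.prime p"
    show "multiplicity p n \<le> multiplicity p (t ^ multiplicity t n)"
    proof (cases "p = t")
      case True then show ?thesis using t by (simp add: prime_imp_prime_elem)
    next
      case False
      then have "\<not> p dvd n" using all p by blast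
      then show ?thesis by (simp add: not_dvd_imp_multiplicity_0)
    qed
  qed
qed

lemma two_prime_powers_if_prime_factors:
  fixes n r t :: nat
  assumes n: "n > 0" and r: "Factorial_Ring.prime r" and t: "Factorial_Ring.prime t" and rt: "r \<noteq> t"
    and all: "\<And>p. Factorial_Ring.prime p \<Longrightarrow> p dvd n \<Longrightarrow> p = r \<or> p = t"
  shows "n = r ^ multiplicity r n * t ^ multiplicity t n"
proof (rule dvd_antisym)
  have cop: "coprime (r ^ multiplicity r n) (t ^ multiplicity t n)"
  proof -
    have "coprime r t" using primes_coprime[OF r t rt] .
    then show ?thesis by (simp add: coprime_power_left_iff coprime_power_right_iff)
  qed
  show "r ^ multiplicity r n * t ^ multiplicity t n dvd n"
    by (rule divides_mult[OF multiplicity_dvd multiplicity_dvd cop])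
  show "n dvd r ^ multiplicity r n * t ^ multiplicity t n"
  proof (rule multiplicity_le_imp_dvd)
    show "n \<noteq> 0" using n by simp
    fix p :: nat assume p: "Factorial_Ring.prime p"
    have pe: "prime_elem r" "prime_elem t" using r t by (simp_all add: prime_imp_prime_elem)
    have nz: "r ^ multiplicity r n \<noteq> 0" "t ^ multiplicity t n \<noteq> 0"
      using r t by (simp_all add: prime_gt_0_nat)
    have m: "multiplicity p (r ^ multiplicity r n * t ^ multiplicity t n)
        = multiplicity p (r ^ multiplicity r n) + multiplicity p (t ^ multiplicity t n)"
      using prime_elem_multiplicity_mult_distrib[OF prime_imp_prime_elem[OF p] nz] .
    show "multiplicity p n \<le> multiplicity p (r ^ multiplicity r n * t ^ multiplicity t n)"
    proof (cases "p = r \<or> p = t")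
      case True
      then show ?thesis using m pe by auto
    next
      case False
      then have "\<not> p dvd n" using all p by blast
      then show ?thesis by (simp add: not_dvd_imp_multiplicity_0)
    qed
  qed
qed

lemma prime_eq_if_powers_eq:
  fixes r t :: nat
  assumes "Factorial_Ring.prime r" "Factorial_Ring.prime t" "r ^ a = t ^ b" "b \<ge> 1"
  shows "r = t"
proof -
  have "t dvd t ^ b" using assms(4) by (simp add: dvd_power)
  then have "t dvd r ^ a" using assms(3) by simp
  then have "t dvd r" using assms(2) prime_dvd_power by blast
  then show ?thesis using assms(1,2) primes_dvd_imp_eq by blast
qed

lemma cong_one_if_pow_cong_one_coprime:
  fixes k n a b :: nat
  assumes ka: "[k ^ a = 1] (mod n)" and kb: "[k ^ b = 1] (mod n)" and cop: "coprime a b"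
  shows "[k = 1] (mod n)"
proof (cases "a = 0")
  case True
  then show ?thesis using cop kb by simp
next
  case False
  then obtain x y where xy: "a * x = b * y + 1" using bezout_nat[OF False, of b] cop by auto
  have "[k ^ (a * x) = 1] (mod n)" using cong_pow[OF ka, of x] by (simp add: power_mult)
  moreover have "[k ^ (a * x) = k] (mod n)"
    using cong_mult[OF cong_pow[OF kb, of y] cong_refl[of k]] xy
      by (simp add: power_add power_mult mult.commute)
  ultimately show ?thesis using cong_sym cong_trans by blast
qed

section \<open>Conjugation and the center\<close>

definition conj_set :: "('a, 'b) monoid_scheme \<Rightarrow> 'a \<Rightarrow> 'a set \<Rightarrow> 'a set" where
  "conj_set G g Y = (\<lambda>y. g \<otimes>\<^bsub>G\<^esub> y \<otimes>\<^bsub>G\<^esub> inv\<^bsub>G\<^esub> g) ` Y"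

context group begin

lemma mult_inv_cancel_left [simp]: "g \<in> carrier G \<Longrightarrow> x \<in> carrier G \<Longrightarrow> g \<otimes> (inv g \<otimes> x) = x"
  by (metis inv_closed m_assoc r_inv l_one)

lemma inv_mult_cancel_left [simp]: "g \<in> carrier G \<Longrightarrow> x \<in> carrier G \<Longrightarrow> inv g \<otimes> (g \<otimes> x) = x"
  by (metis inv_closed m_assoc l_inv l_one)

lemma mult_inv_cancel_right [simp]: "g \<in> carrier G \<Longrightarrow> x \<in> carrier G \<Longrightarrow> x \<otimes> inv g \<otimes> g = x"
  by (metis inv_closed m_assoc l_inv r_one)

lemma inv_mult_cancel_right [simp]: "g \<in> carrier G \<Longrightarrow> x \<in> carrier G \<Longrightarrow> x \<otimes> g \<otimes> inv g = x"
  by (metis inv_closed m_assoc r_inv r_one)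

lemma l_r_coset_eq_conj_set: "g <# Y #> inv g = conj_set G g Y"
  unfolding l_coset_def r_coset_def conj_set_def by auto

lemma normalizer_eq: "Y \<subseteq> carrier G \<Longrightarrow> normalizer G Y = {g \<in> carrier G. conj_set G g Y = Y}"
  unfolding normalizer_def stabilizer_def by (auto simp: l_r_coset_eq_conj_set)

lemma conj_set_memI: "g \<in> carrier G \<Longrightarrow> y \<in> Y \<Longrightarrow> g \<otimes> y \<otimes> inv g \<in> conj_set G g Y"
  unfolding conj_set_def by auto

lemma conj_set_subset_carrier: "g \<in> carrier G \<Longrightarrow> Y \<subseteq> carrier G \<Longrightarrow> conj_set G g Y \<subseteq> carrier G"
  unfolding conj_set_def by auto

lemma subgroup_conj_set: "subgroup Y G \<Longrightarrow> g \<in> carrier G \<Longrightarrow> subgroup (conj_set G g Y) G"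
  using subgroup_conjugation_is_surj2 l_r_coset_eq_conj_set by metis

lemma card_conj_set: "g \<in> carrier G \<Longrightarrow> Y \<subseteq> carrier G \<Longrightarrow> card (conj_set G g Y) = card Y"
  unfolding conj_set_def by (rule card_image) (meson conjugation_is_inj inj_onI subsetD)

lemma conj_set_conj_set:
  "g \<in> carrier G \<Longrightarrow> h \<in> carrier G \<Longrightarrow> Y \<subseteq> carrier G \<Longrightarrow>
    conj_set G g (conj_set G h Y) = conj_set G (g \<otimes> h) Y"
  unfolding conj_set_def image_image
    by (rule image_cong[OF refl]) (simp add: inv_mult_group m_assoc subsetD)

lemma conj_set_one: "Y \<subseteq> carrier G \<Longrightarrow> conj_set G \<one> Y = Y"
  unfolding conj_set_def by (auto simp: subsetD image_iff)

lemma conj_set_inv_conj_set: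
  "g \<in> carrier G \<Longrightarrow> Y \<subseteq> carrier G \<Longrightarrow> conj_set G (inv g) (conj_set G g Y) = Y"
  by (simp add: conj_set_conj_set conj_set_one)

lemma conj_set_mono: "Y1 \<subseteq> Y2 \<Longrightarrow> conj_set G g Y1 \<subseteq> conj_set G g Y2"
  unfolding conj_set_def by auto

lemma mem_conj_set_iff:
  assumes g: "g \<in> carrier G" and Y: "Y \<subseteq> carrier G" and x: "x \<in> carrier G"
  shows "x \<in> conj_set G g Y \<longleftrightarrow> inv g \<otimes> x \<otimes> g \<in> Y"
proof
  assume "x \<in> conj_set G g Y"
  then obtain y where y: "y \<in> Y" "x = g \<otimes> y \<otimes> inv g" unfolding conj_set_def by auto
  have "y \<in> carrier G" using y Y by auto
  then have "inv g \<otimes> x \<otimes> g = y" using y(2) g by (simp add: m_assoc)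
  then show "inv g \<otimes> x \<otimes> g \<in> Y" using y by simp
next
  assume "inv g \<otimes> x \<otimes> g \<in> Y"
  moreover have "g \<otimes> (inv g \<otimes> x \<otimes> g) \<otimes> inv g = x" using g x by (simp add: m_assoc)
  ultimately show "x \<in> conj_set G g Y" using conj_set_memI[OF g] by metis
qed

lemma conj_set_self:
  assumes Y: "subgroup Y G" and g: "g \<in> Y"
  shows "conj_set G g Y = Y"
proof
  show "conj_set G g Y \<subseteq> Y" unfolding conj_set_def using Y g
    by (auto intro!: subgroup.m_closed subgroup.m_inv_closed)
  show "Y \<subseteq> conj_set G g Y"
  proof
    fix y assume y: "y \<in> Y"
    have "inv g \<otimes> y \<otimes> g \<in> Y" using Y g y by (auto intro!: subgroup.m_closed subgroup.m_inv_closed)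
    then show "y \<in> conj_set G g Y"
      using mem_conj_set_iff Y g y subgroup.subset by (metis subsetD)
  qed
qed

lemma subgroup_subset_normalizer:
  assumes "subgroup Y G" shows "Y \<subseteq> normalizer G Y"
proof
  fix g assume "g \<in> Y"
  then have "g \<in> carrier G" "conj_set G g Y = Y"
    using assms subgroup.subset conj_set_self by blast+
  then show "g \<in> normalizer G Y" using normalizer_eq[OF subgroup.subset[OF assms]] by simp
qed

lemma conj_class_eq_image: "conj_class G Y = (\<lambda>g. conj_set G g Y) ` carrier G"
  unfolding conj_class_def l_r_coset_eq_conj_set by auto

lemma conj_class_eq_iff:
  assumes Y1: "Y1 \<subseteq> carrier G" and Y2: "Y2 \<subseteq> carrier G"
  shows "conj_class G Y1 = conj_class G Y2 \<longleftrightarrow> (\<exists>g\<in>carrier G. Y1 = conj_set G g Y2)"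
proof
  assume "conj_class G Y1 = conj_class G Y2"
  moreover have "Y1 \<in> conj_class G Y1"
    unfolding conj_class_eq_image using conj_set_one[OF Y1] one_closed by (metis image_eqI)
  ultimately show "\<exists>g\<in>carrier G. Y1 = conj_set G g Y2" unfolding conj_class_eq_image by auto
next
  assume "\<exists>g\<in>carrier G. Y1 = conj_set G g Y2"
  then obtain h where h: "h \<in> carrier G" "Y1 = conj_set G h Y2" by blast
  have 1: "conj_set G g Y1 = conj_set G (g \<otimes> h) Y2" if "g \<in> carrier G" for g
    using that h Y2 by (simp add: conj_set_conj_set)
  have 2: "conj_set G g Y2 = conj_set G (g \<otimes> inv h) Y1" if "g \<in> carrier G" for g
    using that h Y2 by (simp add: conj_set_conj_set m_assoc)
  show "conj_class G Y1 = conj_class G Y2"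
    unfolding conj_class_eq_image
  proof (intro equalityI subsetI)
    fix W assume "W \<in> (\<lambda>g. conj_set G g Y1) ` carrier G"
    then show "W \<in> (\<lambda>g. conj_set G g Y2) ` carrier G" using 1 h(1) by auto
  next
    fix W assume "W \<in> (\<lambda>g. conj_set G g Y2) ` carrier G"
    then show "W \<in> (\<lambda>g. conj_set G g Y1) ` carrier G" using 2 h(1) by auto
  qed
qed

lemma center_carrier: "z \<in> center G \<Longrightarrow> z \<in> carrier G"
  unfolding center_def by auto

lemma center_comm: "z \<in> center G \<Longrightarrow> g \<in> carrier G \<Longrightarrow> z \<otimes> g = g \<otimes> z"
  unfolding center_def by auto

lemma subgroup_center: "subgroup (center G) G"
proof (rule subgroupI)
  show "center G \<subseteq> carrier G" "center G \<noteq> {}"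
    unfolding center_def by auto
next
  fix x assume x: "x \<in> center G"
  then have xc: "x \<in> carrier G" by (rule center_carrier)
  have "inv x \<otimes> g = g \<otimes> inv x" if g: "g \<in> carrier G" for g
  proof -
    have "inv x \<otimes> g = inv x \<otimes> (g \<otimes> x) \<otimes> inv x" using xc g by (simp add: m_assoc)
    also have "\<dots> = inv x \<otimes> (x \<otimes> g) \<otimes> inv x" using center_comm[OF x g] by simp
    also have "\<dots> = g \<otimes> inv x" using xc g by simp
    finally show ?thesis .
  qed
  then show "inv x \<in> center G" using xc unfolding center_def by auto
next
  fix x y assume x: "x \<in> center G" and y: "y \<in> center G"
  have xc: "x \<in> carrier G" "y \<in> carrier G" using x y center_carrier by auto
  have "x \<otimes> y \<otimes> g = g \<otimes> (x \<otimes> y)" if g: "g \<in> carrier G" for g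
  proof -
    have "x \<otimes> y \<otimes> g = x \<otimes> (g \<otimes> y)" using xc g center_comm[OF y g] by (simp add: m_assoc)
    also have "\<dots> = g \<otimes> (x \<otimes> y)" using xc g center_comm[OF x g] by (simp flip: m_assoc)
    finally show ?thesis .
  qed
  then show "x \<otimes> y \<in> center G" using xc unfolding center_def by auto
qed

lemma center_normal: "center G \<lhd> G"
proof (rule normal_invI[OF subgroup_center])
  fix x h assume "x \<in> carrier G" "h \<in> center G"
  then show "x \<otimes> h \<otimes> inv x \<in> center G"
    using center_comm center_carrier by (metis inv_mult_cancel_right)
qed

lemma conj_set_by_central: "z \<in> center G \<Longrightarrow> Y \<subseteq> carrier G \<Longrightarrow> conj_set G z Y = Y"
proof -
  assume z: "z \<in> center G" and Y: "Y \<subseteq> carrier G"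
  have "z \<otimes> y \<otimes> inv z = y" if "y \<in> Y" for y
    using center_comm[OF z] center_carrier[OF z] Y that by (metis inv_mult_cancel_right subsetD)
  then show ?thesis unfolding conj_set_def by (auto simp: image_iff)
qed

lemma conj_set_central: "Y \<subseteq> center G \<Longrightarrow> g \<in> carrier G \<Longrightarrow> conj_set G g Y = Y"
proof -
  assume Y: "Y \<subseteq> center G" and g: "g \<in> carrier G"
  have "g \<otimes> y \<otimes> inv g = y" if "y \<in> Y" for y
    using center_comm[of y g] center_carrier[of y] Y g that by (metis inv_mult_cancel_right subsetD)
  then show ?thesis unfolding conj_set_def by (auto simp: image_iff)
qed

lemma center_subset_normalizer: "Y \<subseteq> carrier G \<Longrightarrow> center G \<subseteq> normalizer G Y"
  using normalizer_eq conj_set_by_central center_carrier by auto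

lemma conj_set_subset_center_iff:
  assumes g: "g \<in> carrier G" and Y: "Y \<subseteq> carrier G"
  shows "conj_set G g Y \<subseteq> center G \<longleftrightarrow> Y \<subseteq> center G"
proof
  assume "conj_set G g Y \<subseteq> center G"
  then have "conj_set G (inv g) (conj_set G g Y) \<subseteq> conj_set G (inv g) (center G)"
    by (rule conj_set_mono)
  then show "Y \<subseteq> center G" using g Y by (simp add: conj_set_inv_conj_set conj_set_central)
qed (simp add: g conj_set_central)

lemma center_subset_conj_set_iff:
  assumes g: "g \<in> carrier G" and Y: "Y \<subseteq> carrier G"
  shows "center G \<subseteq> conj_set G g Y \<longleftrightarrow> center G \<subseteq> Y"
proof
  assume "center G \<subseteq> conj_set G g Y"
  then have "conj_set G (inv g) (center G) \<subseteq> conj_set G (inv g) (conj_set G g Y)"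
    by (rule conj_set_mono)
  then show "center G \<subseteq> Y" using g Y by (simp add: conj_set_inv_conj_set conj_set_central)
next
  assume "center G \<subseteq> Y"
  then have "conj_set G g (center G) \<subseteq> conj_set G g Y" by (rule conj_set_mono)
  then show "center G \<subseteq> conj_set G g Y" using g by (simp add: conj_set_central)
qed

end

section \<open>Finite groups and p-groups\<close>

lemma (in group_action) orbit_eq_singleton_iff:
  "x \<in> E \<Longrightarrow> orbit G \<phi> x = {x} \<longleftrightarrow> (\<forall>g\<in>carrier G. \<phi> g x = x)"
  using orbit_refl unfolding orbit_def by blast

lemma (in group_action) prime_dvd_card_orbit:
  assumes p: "Factorial_Ring.prime (p::nat)" and card_G: "card (carrier G) = p ^ n" and x: "x \<in> E"
    and moved: "orbit G \<phi> x \<noteq> {x}"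
  shows "p dvd card (orbit G \<phi> x)"
proof -
  have "card (orbit G \<phi> x) dvd p ^ n"
    using orbit_stabilizer_theorem[OF x] card_G unfolding order_def by (metis dvd_triv_left)
  then obtain j where j: "card (orbit G \<phi> x) = p ^ j" using divides_primepow_nat[OF p] by blast
  have "j \<noteq> 0"
  proof
    assume "j = 0"
    then have "card (orbit G \<phi> x) = 1" using j by simp
    then show False using moved orbit_refl[OF x] by (metis card_1_singletonE singletonD)
  qed
  then show ?thesis using j by simp
qed

lemma (in group_action) card_fixed_points_cong:
  assumes p: "Factorial_Ring.prime (p::nat)" and card_G: "card (carrier G) = p ^ n"
    and S: "S \<subseteq> E" "finite S" and invariant: "\<And>g x. g \<in> carrier G \<Longrightarrow> x \<in> S \<Longrightarrow> \<phi> g x \<in> S"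
  shows "[card {x \<in> S. \<forall>g\<in>carrier G. \<phi> g x = x} = card S] (mod p)"
proof -
  define F where "F = {x \<in> S. \<forall>g\<in>carrier G. \<phi> g x = x}"
  define Orbs where "Orbs = orbit G \<phi> ` (S - F)"
  have orbit_in_S: "orbit G \<phi> x \<subseteq> S" if "x \<in> S" for x
    using invariant that unfolding orbit_def by auto
  have orbit_mem: "orbit G \<phi> x \<in> orbits G E \<phi>" if "x \<in> S" for x
    using that S(1) unfolding orbits_def by blast
  have orbit_moved: "orbit G \<phi> x \<inter> F = {}" if x: "x \<in> S - F" for x
  proof (rule ccontr)
    assume "orbit G \<phi> x \<inter> F \<noteq> {}"
    then obtain y where y: "y \<in> orbit G \<phi> x" "y \<in> F" by blast
    have yS: "y \<in> S" using y(2) unfolding F_def by blast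
    have "orbit G \<phi> y = {y}" using y(2) yS S(1) orbit_eq_singleton_iff unfolding F_def by blast
    moreover have "y \<in> orbit G \<phi> y" using orbit_refl yS S(1) by blast
    then have "orbit G \<phi> y = orbit G \<phi> x"
      using disjoint_union[OF orbit_mem[OF yS] orbit_mem, of x] y(1) x by blast
    moreover have "x \<in> orbit G \<phi> x" using orbit_refl x S(1) by blast
    ultimately have "x = y" by blast
    then show False using x y(2) by blast
  qed
  have UO: "\<Union>Orbs = S - F"
  proof
    show "\<Union>Orbs \<subseteq> S - F" unfolding Orbs_def using orbit_in_S orbit_moved by blast
    show "S - F \<subseteq> \<Union>Orbs" unfolding Orbs_def using orbit_refl S(1) by blast
  qed
  have "finite Orbs" unfolding Orbs_def using S(2) by simp
  moreover have "pairwise disjnt Orbs"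
    unfolding Orbs_def pairwise_def disjnt_def using disjoint_union S unfolding orbits_def by blast
  moreover have "finite B" if "B \<in> Orbs" for B
    using that UO S(2) by (metis Union_upper finite_Diff finite_subset)
  ultimately have "card (S - F) = sum card Orbs" using card_Union_disjoint UO by metis
  moreover have "p dvd card B" if "B \<in> Orbs" for B
  proof -
    obtain x where x: "x \<in> S - F" "B = orbit G \<phi> x" using \<open>B \<in> Orbs\<close> unfolding Orbs_def by blast
    have "orbit G \<phi> x \<noteq> {x}" using x(1) S orbit_eq_singleton_iff unfolding F_def by blast
    then show ?thesis using prime_dvd_card_orbit[OF p card_G] x S by blast
  qed
  ultimately have "p dvd card (S - F)" by (simp add: dvd_sum)
  moreover have "card S = card F + card (S - F)"
    using S(2) card_Diff_subset[of F S] card_mono[of S F] unfolding F_def by fastforce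
  ultimately show ?thesis unfolding F_def by (simp add: cong_altdef_nat' cong_sym)
qed

context group begin

lemma card_subgroup_dvd:
  assumes H: "subgroup H G" and P: "subgroup P G" and HP: "H \<subseteq> P" and fin: "finite P"
  shows "card H dvd card P"
proof -
  have "card (rcosets\<^bsub>G\<lparr>carrier := P\<rparr>\<^esub> H) * card H = order (G\<lparr>carrier := P\<rparr>)"
    using group.lagrange[OF subgroup_imp_group[OF P] subgroup_incl[OF H P HP]] .
  then show ?thesis unfolding order_def by (metis dvd_triv_right partial_object.select_convs(1)
      partial_object.surjective partial_object.update_convs(1))
qed

lemma finite_subgroup: "finite (carrier G) \<Longrightarrow> subgroup Y G \<Longrightarrow> finite Y"
  using finite_subset[OF subgroup.subset] by blast

lemma conjugate_fixed_imp_mem: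
  assumes P: "subgroup P G" "finite P" and H: "subgroup H G" "H \<subseteq> P"
    and self_norm: "\<And>g. g \<in> P \<Longrightarrow> conj_set G g H = H \<Longrightarrow> g \<in> H"
    and g: "g \<in> P" and fixed: "\<And>h. h \<in> H \<Longrightarrow> conj_set G h (conj_set G g H) = conj_set G g H"
  shows "g \<in> H"
proof -
  have Hc: "H \<subseteq> carrier G" and gc: "g \<in> carrier G" using H P g subgroup.subset by auto
  have "inv g \<otimes> h \<otimes> g \<in> H" if h: "h \<in> H" for h
  proof -
    have hc: "h \<in> carrier G" using h Hc by auto
    have "conj_set G (inv g \<otimes> h \<otimes> g) H = conj_set G (inv g) (conj_set G h (conj_set G g H))"
      using gc hc Hc by (simp add: conj_set_conj_set m_assoc)
    also have "\<dots> = H" using fixed[OF h] gc Hc by (simp add: conj_set_inv_conj_set)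
    finally show ?thesis
      using self_norm g h H(2) P(1) by (meson subgroup.m_closed subgroup.m_inv_closed subsetD)
  qed
  then have "conj_set G (inv g) H \<subseteq> H" unfolding conj_set_def using gc by auto
  moreover have "card (conj_set G (inv g) H) = card H" using card_conj_set gc Hc by simp
  moreover have "finite H" using finite_subset[OF H(2) P(2)] .
  ultimately have "conj_set G (inv g) H = H" by (simp add: card_subset_eq)
  then have "inv g \<in> H" using self_norm subgroup.m_inv_closed[OF P(1) g] by simp
  then show ?thesis using subgroup.m_inv_closed[OF H(1)] gc by (metis inv_inv)
qed

lemma card_conjugates_self_normalizing:
  assumes P: "subgroup P G" and H: "subgroup H G" "H \<subseteq> P"
    and self_norm: "\<And>g. g \<in> P \<Longrightarrow> conj_set G g H = H \<Longrightarrow> g \<in> H"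
  shows "card ((\<lambda>g. conj_set G g H) ` P) * card H = card P"
proof -
  let ?act = "\<lambda>g. \<lambda>W \<in> {W. W \<subseteq> carrier G}. g <# W #> inv g"
  have act: "group_action (G\<lparr>carrier := P\<rparr>) {W. W \<subseteq> carrier G} ?act"
    using group_action.induced_action[OF action_by_conjugation_on_power_set P] .
  have Hc: "H \<subseteq> carrier G" using H(1) subgroup.subset by auto
  have "orbit (G\<lparr>carrier := P\<rparr>) ?act H = (\<lambda>g. conj_set G g H) ` P"
    unfolding orbit_def using Hc by (auto simp: l_r_coset_eq_conj_set)
  moreover have "stabilizer (G\<lparr>carrier := P\<rparr>) ?act H = {g \<in> P. conj_set G g H = H}"
    unfolding stabilizer_def using Hc by (simp add: l_r_coset_eq_conj_set)
  moreover have "{g \<in> P. conj_set G g H = H} = H"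
    using H(2) self_norm conj_set_self[OF H(1)] by blast
  ultimately show ?thesis
    using group_action.orbit_stabilizer_theorem[OF act, of H] Hc unfolding order_def by simp
qed

lemma conjugates_fixed_self_normalizing:
  assumes P: "subgroup P G" "finite P" and H: "subgroup H G" "H \<subseteq> P"
    and self_norm: "\<And>g. g \<in> P \<Longrightarrow> conj_set G g H = H \<Longrightarrow> g \<in> H"
  shows "{W \<in> (\<lambda>g. conj_set G g H) ` P. \<forall>h\<in>H. conj_set G h W = W} = {H}"
proof (intro equalityI subsetI)
  fix W assume "W \<in> {W \<in> (\<lambda>g. conj_set G g H) ` P. \<forall>h\<in>H. conj_set G h W = W}"
  then obtain g where g: "g \<in> P" "W = conj_set G g H" and fixed: "\<forall>h\<in>H. conj_set G h W = W"
    by blast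
  have "g \<in> H" using conjugate_fixed_imp_mem[OF P H self_norm g(1)] fixed g(2) by blast
  then show "W \<in> {H}" using g(2) conj_set_self[OF H(1)] by simp
next
  fix W assume "W \<in> {H}"
  moreover have "H \<in> (\<lambda>g. conj_set G g H) ` P"
    using conj_set_one subgroup.subset[OF H(1)] subgroup.one_closed[OF P(1)] by (metis image_eqI)
  ultimately show "W \<in> {W \<in> (\<lambda>g. conj_set G g H) ` P. \<forall>h\<in>H. conj_set G h W = W}"
    using conj_set_self[OF H(1)] by blast
qed

text \<open>If \<open>H\<close> were self-normalizing in \<open>P\<close>, the number of its \<open>P\<close>-conjugates would be divisible
  by \<open>t\<close>, yet \<open>H\<close> is the only one of them fixed under conjugation by \<open>H\<close>.\<close>

lemma p_subgroup_normalizer_grows: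
  assumes fin: "finite (carrier G)" and P: "subgroup P G" and t: "Factorial_Ring.prime (t::nat)"
    and card_P: "card P = t ^ n" and H: "subgroup H G" "H \<subseteq> P" "H \<noteq> P"
  shows "\<exists>g\<in>P. g \<notin> H \<and> conj_set G g H = H"
proof (rule ccontr)
  assume "\<not> ?thesis"
  then have self_norm: "\<And>g. g \<in> P \<Longrightarrow> conj_set G g H = H \<Longrightarrow> g \<in> H" by blast
  let ?act = "\<lambda>g. \<lambda>W \<in> {W. W \<subseteq> carrier G}. g <# W #> inv g"
  define S where "S = (\<lambda>g. conj_set G g H) ` P"
  have Hc: "H \<subseteq> carrier G" and Pc: "P \<subseteq> carrier G" using H(1) P subgroup.subset by auto
  have fin_P: "finite P" using finite_subset[OF Pc fin] .
  have S_E: "S \<subseteq> {W. W \<subseteq> carrier G}" unfolding S_def using conj_set_subset_carrier Pc Hc by auto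
  obtain k where k: "card H = t ^ k" "k < n"
  proof -
    obtain k where "k \<le> n" "card H = t ^ k"
      using card_subgroup_dvd[OF H(1) P H(2) fin_P] card_P divides_primepow_nat[OF t] by auto
    moreover have "card H < card P" using H(2,3) fin_P by (simp add: psubset_card_mono psubsetI)
    ultimately show thesis using that card_P t by (metis le_neq_implies_less nat_less_le)
  qed
  have "t ^ n = t ^ (n - k) * t ^ k" using k(2) by (simp flip: power_add)
  then have "card S = t ^ (n - k)"
    using card_conjugates_self_normalizing[OF P H(1,2) self_norm] card_P k(1) t
    unfolding S_def by (simp add: prime_gt_0_nat)
  then have dvd_S: "t dvd card S" using k(2) by simp
  moreover have "[card {W \<in> S. \<forall>h\<in>carrier (G\<lparr>carrier := H\<rparr>). ?act h W = W} = card S] (mod t)"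
  proof (rule group_action.card_fixed_points_cong
      [OF group_action.induced_action[OF action_by_conjugation_on_power_set H(1)] t])
    show "card (carrier (G\<lparr>carrier := H\<rparr>)) = t ^ k" using k by simp
    fix h W assume h: "h \<in> carrier (G\<lparr>carrier := H\<rparr>)" and W: "W \<in> S"
    then obtain g where g: "g \<in> P" "W = conj_set G g H" unfolding S_def by auto
    have "h \<in> carrier G" "g \<in> carrier G" using h g H(2) Pc by auto
    then have "?act h W = conj_set G (h \<otimes> g) H"
      using g(2) W S_E Hc by (auto simp: l_r_coset_eq_conj_set conj_set_conj_set)
    moreover have "h \<otimes> g \<in> P" using h g H(2) subgroup.m_closed[OF P] by auto
    ultimately show "?act h W \<in> S" unfolding S_def by blast
  qed (use S_E fin_P in \<open>simp_all add: S_def\<close>)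
  moreover have "{W \<in> S. \<forall>h\<in>carrier (G\<lparr>carrier := H\<rparr>). ?act h W = W}
      = {W \<in> S. \<forall>h\<in>H. conj_set G h W = W}"
    using S_E Hc by (auto simp: l_r_coset_eq_conj_set)
  ultimately have "[1 = card S] (mod t)"
    using conjugates_fixed_self_normalizing[OF P fin_P H(1,2) self_norm] unfolding S_def by simp
  moreover have "[card S = 0] (mod t)" using dvd_S by (simp add: cong_0_iff)
  ultimately have "[1 = 0] (mod t)" by (rule cong_trans)
  then have "t dvd 1" using cong_0_iff cong_sym by blast
  then show False using t by simp
qed

lemma subgroup_cyclic: "x \<in> carrier G \<Longrightarrow> subgroup (generate G {x}) G"
  by (rule generate_is_subgroup) simp

lemma mem_cyclic: "x \<in> carrier G \<Longrightarrow> x \<in> generate G {x}"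
  by (simp add: generate.incl)

lemma cyclic_subset: "subgroup H G \<Longrightarrow> x \<in> H \<Longrightarrow> generate G {x} \<subseteq> H"
  by (rule generate_subgroup_incl) auto

lemma card_cyclic: "x \<in> carrier G \<Longrightarrow> card (generate G {x}) = ord x"
  by (simp add: generate_pow_card)

lemma cyclic_eq_powers:
  "finite (carrier G) \<Longrightarrow> x \<in> carrier G \<Longrightarrow> generate G {x} = {x [^] (k::nat) | k. True}"
  using generate_pow_on_finite_carrier by auto

lemma pow_commute:
  "x \<in> carrier G \<Longrightarrow> y \<in> carrier G \<Longrightarrow> x \<otimes> y = y \<otimes> x \<Longrightarrow> x [^] (k::nat) \<otimes> y = y \<otimes> x [^] k"
proof (induction k)
  case 0 then show ?case by simp
next
  case (Suc k)
  have "x [^] Suc k \<otimes> y = x [^] k \<otimes> (x \<otimes> y)" using Suc.prems by (simp add: m_assoc)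
  also have "\<dots> = (x [^] k \<otimes> y) \<otimes> x" using Suc.prems by (simp add: m_assoc)
  also have "\<dots> = y \<otimes> x [^] Suc k" using Suc by (simp add: m_assoc)
  finally show ?case .
qed

lemma cyclic_commute: "finite (carrier G) \<Longrightarrow> x \<in> carrier G \<Longrightarrow> y \<in> carrier G \<Longrightarrow> x \<otimes> y = y \<otimes> x \<Longrightarrow>
   a \<in> generate G {x} \<Longrightarrow> a \<otimes> y = y \<otimes> a"
  using cyclic_eq_powers pow_commute by auto

lemma cyclic_comm:
  "finite (carrier G) \<Longrightarrow> x \<in> carrier G \<Longrightarrow> a \<in> generate G {x} \<Longrightarrow> b \<in> generate G {x} \<Longrightarrow>
    a \<otimes> b = b \<otimes> a"
proof -
  assume f: "finite (carrier G)" and x: "x \<in> carrier G"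
    and a: "a \<in> generate G {x}" and b: "b \<in> generate G {x}"
  obtain i j where ij: "a = x [^] (i::nat)" "b = x [^] (j::nat)"
    using cyclic_eq_powers[OF f x] a b by auto
  show ?thesis using ij x by (simp add: nat_pow_mult add.commute)
qed

lemma mem_set_mult_iff: "a \<in> A <#> B \<longleftrightarrow> (\<exists>x\<in>A. \<exists>y\<in>B. a = x \<otimes> y)"
  unfolding set_mult_def by auto

lemma subgroup_set_mult_commuting:
  assumes A: "subgroup A G" and B: "subgroup B G" and c: "\<And>a b. a \<in> A \<Longrightarrow> b \<in> B \<Longrightarrow> a \<otimes> b = b \<otimes> a"
  shows "subgroup (A <#> B) G"
proof (rule subgroupI)
  have Ac: "A \<subseteq> carrier G" and Bc: "B \<subseteq> carrier G" using A B subgroup.subset by auto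
  show "A <#> B \<subseteq> carrier G" using Ac Bc setmult_subset_G by blast
  have "\<one> \<otimes> \<one> \<in> A <#> B"
    using subgroup.one_closed[OF A] subgroup.one_closed[OF B] mem_set_mult_iff by blast
  then show "A <#> B \<noteq> {}" by auto
  fix u assume u: "u \<in> A <#> B"
  then obtain a b where ab: "a \<in> A" "b \<in> B" "u = a \<otimes> b" using mem_set_mult_iff by auto
  have abc: "a \<in> carrier G" "b \<in> carrier G" using ab Ac Bc by auto
  have "inv u = inv b \<otimes> inv a" using ab abc by (simp add: inv_mult_group)
  also have "\<dots> = inv a \<otimes> inv b"
    using c[OF subgroup.m_inv_closed[OF A ab(1)] subgroup.m_inv_closed[OF B ab(2)]] by simp
  finally show "inv u \<in> A <#> B"
    using subgroup.m_inv_closed[OF A ab(1)] subgroup.m_inv_closed[OF B ab(2)] mem_set_mult_iff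
      by blast
next
  have Ac: "A \<subseteq> carrier G" and Bc: "B \<subseteq> carrier G" using A B subgroup.subset by auto
  fix u v assume u: "u \<in> A <#> B" and v: "v \<in> A <#> B"
  then obtain a b a' b' where ab: "a \<in> A" "b \<in> B" "u = a \<otimes> b" "a' \<in> A" "b' \<in> B" "v = a' \<otimes> b'"
    using mem_set_mult_iff by metis
  have abc: "a \<in> carrier G" "b \<in> carrier G" "a' \<in> carrier G" "b' \<in> carrier G" using ab Ac Bc by auto
  have "u \<otimes> v = a \<otimes> (b \<otimes> a') \<otimes> b'" using ab abc by (simp add: m_assoc)
  also have "\<dots> = a \<otimes> (a' \<otimes> b) \<otimes> b'" using c[OF ab(4) ab(2)] by simp
  also have "\<dots> = (a \<otimes> a') \<otimes> (b \<otimes> b')" using abc by (simp add: m_assoc)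
  finally show "u \<otimes> v \<in> A <#> B"
    using subgroup.m_closed[OF A ab(1) ab(4)] subgroup.m_closed[OF B ab(2) ab(5)] mem_set_mult_iff
      by blast
qed

lemma subset_set_mult_left: "subgroup B G \<Longrightarrow> A \<subseteq> carrier G \<Longrightarrow> A \<subseteq> A <#> B"
proof
  fix a assume B: "subgroup B G" and A: "A \<subseteq> carrier G" and a: "a \<in> A"
  have "a = a \<otimes> \<one>" using a A by auto
  then show "a \<in> A <#> B" using a subgroup.one_closed[OF B] mem_set_mult_iff by blast
qed

lemma subset_set_mult_right: "subgroup A G \<Longrightarrow> B \<subseteq> carrier G \<Longrightarrow> B \<subseteq> A <#> B"
proof
  fix b assume A: "subgroup A G" and B: "B \<subseteq> carrier G" and b: "b \<in> B"
  have "b = \<one> \<otimes> b" using b B by auto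
  then show "b \<in> A <#> B" using b subgroup.one_closed[OF A] mem_set_mult_iff by blast
qed

lemma card_set_mult:
  assumes f: "finite (carrier G)" and A: "subgroup A G" and B: "subgroup B G" and AB: "A \<inter> B = {\<one>}"
  shows "card (A <#> B) = card A * card B"
proof -
  have Ac: "A \<subseteq> carrier G" and Bc: "B \<subseteq> carrier G" using A B subgroup.subset by auto
  have eq: "A <#> B = (\<lambda>(a, b). a \<otimes> b) ` (A \<times> B)" unfolding set_mult_def by auto
  have "inj_on (\<lambda>(a, b). a \<otimes> b) (A \<times> B)"
  proof (rule inj_onI, clarify)
    fix a b a' b' assume ab: "a \<in> A" "b \<in> B" "a' \<in> A" "b' \<in> B" and e: "a \<otimes> b = a' \<otimes> b'"
    have abc: "a \<in> carrier G" "b \<in> carrier G" "a' \<in> carrier G" "b' \<in> carrier G"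
      using ab Ac Bc by auto
    have "inv a' \<otimes> a = b' \<otimes> inv b"
    proof -
      have "inv a' \<otimes> (a \<otimes> b) \<otimes> inv b = inv a' \<otimes> (a' \<otimes> b') \<otimes> inv b" using e by simp
      then show ?thesis using abc by (simp add: m_assoc)
    qed
    moreover have "inv a' \<otimes> a \<in> A"
      using ab subgroup.m_closed[OF A] subgroup.m_inv_closed[OF A] by simp
    moreover have "b' \<otimes> inv b \<in> B"
      using ab subgroup.m_closed[OF B] subgroup.m_inv_closed[OF B] by simp
    ultimately have e1: "inv a' \<otimes> a = \<one>" "b' \<otimes> inv b = \<one>" using AB by auto
    have "a = a' \<otimes> (inv a' \<otimes> a)" using abc by simp
    then have "a = a'" using e1 abc by simp
    moreover have "b' = (b' \<otimes> inv b) \<otimes> b" using abc by simp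
    then have "b = b'" using e1 abc by simp
    ultimately have "a = a'" "b = b'" by auto
    then show "a = a' \<and> b = b'" by simp
  qed
  then have "card (A <#> B) = card (A \<times> B)" unfolding eq by (rule card_image)
  then show ?thesis by (simp add: card_cartesian_product)
qed

lemma subgroup_nat_pow_closed: "subgroup H G \<Longrightarrow> a \<in> H \<Longrightarrow> a [^] (k::nat) \<in> H"
  by (induction k) (auto simp: subgroup.one_closed subgroup.m_closed subgroup.subset subsetD)

lemma ord_pow_prime_power:
  assumes x: "x \<in> carrier G" and p: "Factorial_Ring.prime (p::nat)" and ord: "ord x = p ^ j"
    and i: "i \<le> j"
  shows "ord (x [^] (p ^ i)) = p ^ (j - i)"
  using ord_pow[OF x] ord i p by (simp add: le_imp_power_dvd power_diff prime_gt_0_nat)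

lemma exists_subgroup_of_prime_order:
  assumes f: "finite (carrier G)" and S: "subgroup S G" and p: "Factorial_Ring.prime (p::nat)"
    and cS: "card S = p ^ c" and c: "c \<ge> 1"
  shows "\<exists>W. subgroup W G \<and> W \<subseteq> S \<and> card W = p"
proof -
  have Sc: "S \<subseteq> carrier G" using S subgroup.subset by auto
  have "p \<le> p ^ c" using c prime_gt_1_nat[OF p] by (simp add: self_le_power)
  then have "S \<noteq> {\<one>}" using cS prime_gt_1_nat[OF p] by auto
  then obtain s where s: "s \<in> S" "s \<noteq> \<one>" using subgroup.one_closed[OF S] by blast
  have sc: "s \<in> carrier G" using s Sc by auto
  have "ord s dvd p ^ c"
    using card_subgroup_dvd[OF subgroup_cyclic[OF sc] S cyclic_subset[OF S s(1)] finite_subgroup[OF f S]]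
      cS card_cyclic[OF sc] by simp
  then obtain j where j: "j \<le> c" "ord s = p ^ j" using divides_primepow_nat[OF p] by auto
  have "j \<noteq> 0" using j ord_eq_1[OF sc] s by auto
  define w where "w = s [^] (p ^ (j - 1))"
  have wc: "w \<in> carrier G" unfolding w_def using sc by simp
  have ow: "ord w = p" using ord_pow_prime_power[OF sc p j(2), of "j - 1"] \<open>j \<noteq> 0\<close> unfolding w_def by simp
  have "w \<in> S" unfolding w_def using subgroup_nat_pow_closed[OF S s(1)] .
  then show ?thesis using subgroup_cyclic[OF wc] cyclic_subset[OF S] card_cyclic[OF wc] ow by blast
qed

lemma pow_conj: "g \<in> carrier G \<Longrightarrow> a \<in> carrier G \<Longrightarrow> (g \<otimes> a \<otimes> inv g) [^] (n::nat) = g \<otimes> a [^] n \<otimes> inv g"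
proof (induction n)
  case 0 then show ?case by simp
next
  case (Suc n)
  have "(g \<otimes> a \<otimes> inv g) [^] Suc n = (g \<otimes> a [^] n \<otimes> inv g) \<otimes> (g \<otimes> a \<otimes> inv g)" using Suc by simp
  also have "\<dots> = g \<otimes> (a [^] n \<otimes> a) \<otimes> inv g" using Suc.prems by (simp add: m_assoc)
  finally show ?case by (simp add: nat_pow_Suc)
qed

lemma pow_eq_iff_cong:
  "x \<in> carrier G \<Longrightarrow> ord x = r \<Longrightarrow> x [^] (a::nat) = x [^] (b::nat) \<longleftrightarrow> [a = b] (mod r)"
proof -
  assume x: "x \<in> carrier G" and o: "ord x = r"
  have "x [^] a = x [^] b \<longleftrightarrow> x [^] (int a) = x [^] (int b)" by (simp add: int_pow_int)
  also have "\<dots> \<longleftrightarrow> int r dvd (int b - int a)" using int_pow_eq[OF x] o by simp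
  also have "\<dots> \<longleftrightarrow> [int a = int b] (mod int r)" by (simp add: cong_iff_dvd_diff dvd_diff_commute)
  also have "\<dots> \<longleftrightarrow> [a = b] (mod r)" by (simp add: cong_int_iff)
  finally show ?thesis .
qed

lemma commuting_set_mult_center:
  assumes A: "subgroup A G" and comm: "\<And>a b. a \<in> A \<Longrightarrow> b \<in> A \<Longrightarrow> a \<otimes> b = b \<otimes> a"
    and u: "u \<in> A <#> center G" and v: "v \<in> A <#> center G"
  shows "u \<otimes> v = v \<otimes> u"
proof -
  obtain a z where az: "a \<in> A" "z \<in> center G" "u = a \<otimes> z" using u mem_set_mult_iff by blast
  obtain b w where bw: "b \<in> A" "w \<in> center G" "v = b \<otimes> w" using v mem_set_mult_iff by blast
  have c: "a \<in> carrier G" "b \<in> carrier G" "z \<in> carrier G" "w \<in> carrier G"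
    using az bw subgroup.subset[OF A] center_carrier by auto
  have "u \<otimes> v = a \<otimes> (z \<otimes> b) \<otimes> w" using az bw c by (simp add: m_assoc)
  also have "\<dots> = (a \<otimes> b) \<otimes> (z \<otimes> w)" using c center_comm[OF az(2) c(2)] by (simp add: m_assoc)
  also have "\<dots> = (b \<otimes> a) \<otimes> (w \<otimes> z)"
    using comm[OF az(1) bw(1)] center_comm[OF az(2) c(4)] by simp
  also have "\<dots> = b \<otimes> (a \<otimes> w) \<otimes> z" using c by (simp add: m_assoc)
  also have "\<dots> = b \<otimes> (w \<otimes> a) \<otimes> z" using center_comm[OF bw(2) c(1)] by simp
  also have "\<dots> = v \<otimes> u" using az bw c by (simp add: m_assoc)
  finally show ?thesis .
qed

lemma commutative_subgroup_ne_carrier: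
  assumes "center G \<noteq> carrier G" and "subgroup A G"
    and "\<And>a b. a \<in> A \<Longrightarrow> b \<in> A \<Longrightarrow> a \<otimes> b = b \<otimes> a"
  shows "A \<noteq> carrier G"
proof
  assume "A = carrier G"
  then have "carrier G \<subseteq> center G" using assms(3) unfolding center_def by blast
  then show False using assms(1) center_carrier by blast
qed

context
  fixes x assumes x: "x \<in> carrier G"
begin

lemma subgroup_cyclic_mult_center: "subgroup (generate G {x} <#> center G) G"
proof (rule subgroup_set_mult_commuting[OF subgroup_cyclic[OF x] subgroup_center])
  fix a b assume "a \<in> generate G {x}" "b \<in> center G"
  then show "a \<otimes> b = b \<otimes> a" using subgroup.subset[OF subgroup_cyclic[OF x]] center_comm by auto
qed

lemma center_subset_cyclic_mult_center: "center G \<subseteq> generate G {x} <#> center G"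
  using subset_set_mult_right[OF subgroup_cyclic[OF x]] center_carrier by blast

lemma mem_cyclic_mult_center: "x \<in> generate G {x} <#> center G"
  using subset_set_mult_left[OF subgroup_center subgroup.subset[OF subgroup_cyclic[OF x]]] mem_cyclic[OF x]
  by blast

lemma cyclic_mult_center_ne_carrier:
  "finite (carrier G) \<Longrightarrow> center G \<noteq> carrier G \<Longrightarrow> generate G {x} <#> center G \<noteq> carrier G"
proof -
  assume fin: "finite (carrier G)" and ZG: "center G \<noteq> carrier G"
  have "u \<otimes> v = v \<otimes> u" if "u \<in> generate G {x} <#> center G" "v \<in> generate G {x} <#> center G" for u v
    using commuting_set_mult_center[OF subgroup_cyclic[OF x] cyclic_comm[OF fin x]] that by blast
  then show ?thesis
    using commutative_subgroup_ne_carrier[OF ZG subgroup_cyclic_mult_center] by blast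
qed

end

text \<open>For \<open>x\<close> noncentral, \<open>\<langle>x\<rangle>Z\<close> is abelian and so lies strictly between \<open>Z\<close> and \<open>G\<close>.\<close>

lemma index_center_not_prime:
  assumes fin: "finite (carrier G)" and ZG: "center G \<noteq> carrier G"
  shows "\<not> Factorial_Ring.prime (card (rcosets (center G)))"
proof
  let ?q = "card (rcosets (center G))"
  assume p: "Factorial_Ring.prime ?q"
  obtain x where x: "x \<in> carrier G" "x \<notin> center G" using ZG center_carrier by blast
  let ?A = "generate G {x} <#> center G"
  have sA: "subgroup ?A G" using subgroup_cyclic_mult_center[OF x(1)] .
  have lag: "?q * card (center G) = card (carrier G)"
    using lagrange[OF subgroup_center] unfolding order_def .
  have "card (center G) > 0"
    using finite_subgroup[OF fin subgroup_center] subgroup.one_closed[OF subgroup_center] card_gt_0_iff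
      by blast
  moreover obtain m where m: "card ?A = card (center G) * m"
    using card_subgroup_dvd[OF subgroup_center sA center_subset_cyclic_mult_center[OF x(1)] finite_subgroup[OF fin sA]]
    by blast
  moreover have "card ?A dvd card (center G) * ?q"
    using card_subgroup_dvd[OF sA subgroup_self subgroup.subset[OF sA] fin] lag
      by (simp add: mult.commute)
  ultimately have "m dvd ?q" by simp
  then consider "m = 1" | "m = ?q" using p prime_nat_iff by blast
  then show False
  proof cases
    case 1
    then have "center G = ?A"
      using m card_subset_eq[OF finite_subgroup[OF fin sA] center_subset_cyclic_mult_center[OF x(1)]]
        by simp
    then show False using x mem_cyclic_mult_center by blast
  next
    case 2
    then have "?A = carrier G"
      using m lag card_subset_eq[OF fin subgroup.subset[OF sA]] by (simp add: mult.commute)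
    then show False using cyclic_mult_center_ne_carrier[OF x(1) fin ZG] by simp
  qed
qed

lemma card_subgroup_prime_power:
  assumes "finite (carrier G)" "Factorial_Ring.prime (p::nat)" "subgroup H G" "subgroup R G" "H \<subseteq> R"
    "card R = p ^ m"
  obtains c where "c \<le> m" "card H = p ^ c"
  using card_subgroup_dvd[OF assms(3-5) finite_subgroup[OF assms(1,4)]] assms(6)
    divides_primepow_nat[OF assms(2)] by auto

lemma normalizer_ne_if_prime_power_order:
  assumes "finite (carrier G)" "Factorial_Ring.prime (t::nat)" "card (carrier G) = t ^ k"
    and H: "subgroup H G" "H \<noteq> carrier G"
  shows "normalizer G H \<noteq> H"
proof -
  obtain g where "g \<in> carrier G" "g \<notin> H" "conj_set G g H = H"
    using p_subgroup_normalizer_grows[OF assms(1) subgroup_self assms(2,3) H(1) subgroup.subset[OF H(1)] H(2)]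
    by blast
  then show ?thesis using normalizer_eq[OF subgroup.subset[OF H(1)]] by blast
qed

lemma inter_eq_one_if_coprime_card:
  assumes fin: "finite (carrier G)" and A: "subgroup A G" and B: "subgroup B G"
    and cop: "coprime (card A) (card B)"
  shows "A \<inter> B = {\<one>}"
proof -
  have sAB: "subgroup (A \<inter> B) G" using subgroups_Inter_pair[OF A B] .
  have "card (A \<inter> B) dvd card A" "card (A \<inter> B) dvd card B"
    using card_subgroup_dvd[OF sAB A _ finite_subgroup[OF fin A]]
      card_subgroup_dvd[OF sAB B _ finite_subgroup[OF fin B]] by auto
  then have "card (A \<inter> B) = 1" using cop coprime_common_divisor_nat by blast
  moreover have "\<one> \<in> A \<inter> B" using subgroup.one_closed[OF A] subgroup.one_closed[OF B] by simp
  ultimately show ?thesis by (metis card_1_singletonE singletonD)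
qed

lemma conj_pow_eq_mult_central_pow:
  assumes x: "x \<in> carrier G" and y: "y \<in> carrier G" and u: "u \<in> center G"
    and conj: "x \<otimes> y \<otimes> inv x = y \<otimes> u"
  shows "x [^] (k::nat) \<otimes> y \<otimes> inv (x [^] k) = y \<otimes> u [^] k"
proof (induction k)
  case 0
  then show ?case using y by simp
next
  case (Suc k)
  have xk: "x [^] k \<in> carrier G" using x by simp
  have uc: "u \<in> carrier G" using center_carrier[OF u] .
  have "x [^] Suc k \<otimes> y \<otimes> inv (x [^] Suc k) = x [^] k \<otimes> (x \<otimes> y \<otimes> inv x) \<otimes> inv (x [^] k)"
    using x y xk by (simp add: inv_mult_group m_assoc)
  also have "\<dots> = (x [^] k \<otimes> y \<otimes> inv (x [^] k)) \<otimes> u"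
    using conj xk y uc center_comm[OF u inv_closed[OF xk]] by (simp add: m_assoc)
  also have "\<dots> = y \<otimes> u [^] Suc k" using Suc y uc by (simp add: m_assoc)
  finally show ?case .
qed

lemma conj_pow_eq_pow_pow:
  assumes x: "x \<in> carrier G" and y: "y \<in> carrier G" and conj: "y \<otimes> x \<otimes> inv y = x [^] (k::nat)"
  shows "y [^] (j::nat) \<otimes> x \<otimes> inv (y [^] j) = x [^] (k ^ j)"
proof (induction j)
  case 0
  then show ?case using x by simp
next
  case (Suc j)
  have yj: "y [^] j \<in> carrier G" using y by simp
  have "y [^] Suc j \<otimes> x \<otimes> inv (y [^] Suc j) = y [^] j \<otimes> (y \<otimes> x \<otimes> inv y) \<otimes> inv (y [^] j)"
    using y x yj by (simp add: inv_mult_group m_assoc)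
  also have "\<dots> = (y [^] j \<otimes> x \<otimes> inv (y [^] j)) [^] k" using conj pow_conj[OF yj x] by simp
  also have "\<dots> = x [^] (k ^ Suc j)" using Suc nat_pow_pow[OF x] by (simp add: mult.commute)
  finally show ?case .
qed

lemma inter_eq_one_if_prime_card:
  assumes fin: "finite (carrier G)" and p: "Factorial_Ring.prime (p::nat)"
    and A: "subgroup A G" and B: "subgroup B G" and card: "card A = p" "card B = p" and ne: "A \<noteq> B"
  shows "A \<inter> B = {\<one>}"
proof -
  have sAB: "subgroup (A \<inter> B) G" using subgroups_Inter_pair[OF A B] .
  have "card (A \<inter> B) dvd p"
    using card_subgroup_dvd[OF sAB A _ finite_subgroup[OF fin A]] card(1) by simp
  then consider "card (A \<inter> B) = 1" | "card (A \<inter> B) = p" using p prime_nat_iff by blast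
  then have "card (A \<inter> B) = 1"
  proof cases
    case 2
    then have "A \<inter> B = A" "A \<inter> B = B"
      using card_subset_eq[OF finite_subgroup[OF fin A], of "A \<inter> B"]
        card_subset_eq[OF finite_subgroup[OF fin B], of "A \<inter> B"] card by auto
    then show ?thesis using ne by simp
  qed
  moreover have "\<one> \<in> A \<inter> B" using subgroup.one_closed[OF A] subgroup.one_closed[OF B] by simp
  ultimately show ?thesis by (metis card_1_singletonE singletonD)
qed

end

section \<open>Subgroups that are not self-normalizing\<close>

definition central_subgroups :: "('a, 'b) monoid_scheme \<Rightarrow> 'a set set" where
  "central_subgroups G = {Y. subgroup Y G \<and> Y \<noteq> {\<one>\<^bsub>G\<^esub>} \<and> Y \<subseteq> center G}"

definition nsn_over_center :: "('a, 'b) monoid_scheme \<Rightarrow> 'a set set" where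
  "nsn_over_center G = {Y. subgroup Y G \<and> center G \<subseteq> Y \<and> \<not> Y \<subseteq> center G \<and> normalizer G Y \<noteq> Y}"

definition center_incomparable :: "('a, 'b) monoid_scheme \<Rightarrow> 'a set set" where
  "center_incomparable G = {Y. subgroup Y G \<and> \<not> Y \<subseteq> center G \<and> \<not> center G \<subseteq> Y}"

definition image_mod_center :: "('a, 'b) monoid_scheme \<Rightarrow> 'a set \<Rightarrow> 'a set set" where
  "image_mod_center G Y = (\<lambda>y. center G #>\<^bsub>G\<^esub> y) ` Y"

context group begin

lemma nsn_subgroups_split:
  assumes ZG: "center G \<noteq> carrier G"
  shows "nsn_subgroups G = central_subgroups G \<union> nsn_over_center G \<union> center_incomparable G"
proof
  show "nsn_subgroups G \<subseteq> central_subgroups G \<union> nsn_over_center G \<union> center_incomparable G"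
    unfolding nsn_subgroups_def central_subgroups_def nsn_over_center_def center_incomparable_def
      by blast
next
  have Zc: "center G \<subseteq> carrier G" using center_carrier by auto
  have one_Z: "\<one> \<in> center G" using subgroup_center subgroup.one_closed by blast
  have "central_subgroups G \<subseteq> nsn_subgroups G"
  proof
    fix Y assume "Y \<in> central_subgroups G"
    then have Y: "subgroup Y G" "Y \<noteq> {\<one>}" "Y \<subseteq> center G" unfolding central_subgroups_def by auto
    have "normalizer G Y = carrier G"
      using normalizer_eq[of Y] Y(3) Zc conj_set_central by auto
    then have "normalizer G Y \<noteq> Y" using Y(3) ZG Zc by auto
    then show "Y \<in> nsn_subgroups G" using Y unfolding nsn_subgroups_def by auto
  qed
  moreover have "nsn_over_center G \<subseteq> nsn_subgroups G"
  proof
    fix Y assume "Y \<in> nsn_over_center G"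
    then have Y: "subgroup Y G" "center G \<subseteq> Y" "\<not> Y \<subseteq> center G" "normalizer G Y \<noteq> Y"
      unfolding nsn_over_center_def by auto
    have "Y \<noteq> {\<one>}" using Y(3) one_Z by auto
    then show "Y \<in> nsn_subgroups G" using Y unfolding nsn_subgroups_def by auto
  qed
  moreover have "center_incomparable G \<subseteq> nsn_subgroups G"
  proof
    fix Y assume "Y \<in> center_incomparable G"
    then have Y: "subgroup Y G" "\<not> Y \<subseteq> center G" "\<not> center G \<subseteq> Y"
      unfolding center_incomparable_def by auto
    have "Y \<noteq> {\<one>}" using Y(2) one_Z by auto
    moreover have "normalizer G Y \<noteq> Y"
      using center_subset_normalizer[of Y] Y subgroup.subset by blast
    ultimately show "Y \<in> nsn_subgroups G" using Y unfolding nsn_subgroups_def by auto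
  qed
  ultimately show "central_subgroups G \<union> nsn_over_center G \<union> center_incomparable G \<subseteq> nsn_subgroups G"
    by blast
qed

lemma conj_class_eq_position:
  assumes Y1: "subgroup Y1 G" and Y2: "subgroup Y2 G" and eq: "conj_class G Y1 = conj_class G Y2"
  shows "(Y1 \<subseteq> center G \<longleftrightarrow> Y2 \<subseteq> center G) \<and> (center G \<subseteq> Y1 \<longleftrightarrow> center G \<subseteq> Y2)"
proof -
  obtain g where g: "g \<in> carrier G" "Y1 = conj_set G g Y2"
    using conj_class_eq_iff[of Y1 Y2] eq Y1 Y2 subgroup.subset by blast
  then show ?thesis
    using conj_set_subset_center_iff center_subset_conj_set_iff Y2 subgroup.subset by metis
qed

lemma finite_conj_class_image:
  "finite (carrier G) \<Longrightarrow> S \<subseteq> {Y. Y \<subseteq> carrier G} \<Longrightarrow> finite (conj_class G ` S)"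
proof -
  assume f: "finite (carrier G)" and S: "S \<subseteq> {Y. Y \<subseteq> carrier G}"
  have "S \<subseteq> Pow (carrier G)" using S by auto
  then have "finite S" using f finite_subset finite_Pow_iff by blast
  then show ?thesis by simp
qed

lemma DD_split:
  assumes fin: "finite (carrier G)" and ZG: "center G \<noteq> carrier G"
  shows "DD G = card (conj_class G ` central_subgroups G) + card (conj_class G ` nsn_over_center G)
    + card (conj_class G ` center_incomparable G)"
proof -
  let ?L = "conj_class G ` central_subgroups G" and ?H = "conj_class G ` nsn_over_center G"
    and ?M = "conj_class G ` center_incomparable G"
  have fin_LHM: "finite ?L" "finite ?H" "finite ?M"
    by (rule finite_conj_class_image[OF fin],
        auto simp: central_subgroups_def nsn_over_center_def center_incomparable_def dest: subgroup.subset)+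
  have LH: "?L \<inter> ?H = {}"
  proof (rule ccontr)
    assume "?L \<inter> ?H \<noteq> {}"
    then obtain Y1 Y2 where Y: "Y1 \<in> central_subgroups G" "Y2 \<in> nsn_over_center G"
      "conj_class G Y1 = conj_class G Y2" by auto
    have s: "subgroup Y1 G" "subgroup Y2 G" "Y1 \<subseteq> center G" "\<not> Y2 \<subseteq> center G"
      using Y(1,2) unfolding central_subgroups_def nsn_over_center_def by auto
    show False using conj_class_eq_position[OF s(1,2) Y(3)] s(3,4) by simp
  qed
  have LHM: "(?L \<union> ?H) \<inter> ?M = {}"
  proof (rule ccontr)
    assume "(?L \<union> ?H) \<inter> ?M \<noteq> {}"
    then obtain Y1 Y2 where Y: "Y1 \<in> central_subgroups G \<union> nsn_over_center G" "Y2 \<in> center_incomparable G"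
      "conj_class G Y1 = conj_class G Y2" by auto
    have s: "subgroup Y1 G" "subgroup Y2 G" "Y1 \<subseteq> center G \<or> center G \<subseteq> Y1"
      "\<not> Y2 \<subseteq> center G" "\<not> center G \<subseteq> Y2"
      using Y(1,2)
        unfolding central_subgroups_def nsn_over_center_def center_incomparable_def by auto
    show False using conj_class_eq_position[OF s(1,2) Y(3)] s(3,4,5) by blast
  qed
  have "DD G = card (?L \<union> ?H \<union> ?M)"
    unfolding DD_def nsn_subgroups_split[OF ZG] image_Un by simp
  also have "\<dots> = card ?L + card ?H + card ?M"
    using fin_LHM LH LHM by (simp add: card_Un_disjoint)
  finally show ?thesis .
qed

lemma conj_class_central: "Y \<subseteq> center G \<Longrightarrow> conj_class G Y = {Y}"
  unfolding conj_class_eq_image using conj_set_central by auto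

lemma card_conj_class_central_subgroups:
  "card (conj_class G ` central_subgroups G) = card (central_subgroups G)"
proof -
  have "inj_on (conj_class G) (central_subgroups G)"
    by (rule inj_onI) (auto simp: central_subgroups_def conj_class_central)
  then show ?thesis by (rule card_image)
qed

lemma DD_center: "DD (G\<lparr>carrier := center G\<rparr>) = card (central_subgroups G - {center G})"
proof -
  let ?Zs = "G\<lparr>carrier := center G\<rparr>"
  have grp: "group ?Zs" using subgroup_imp_group subgroup_center by blast
  have sub_iff: "subgroup Y ?Zs \<longleftrightarrow> subgroup Y G \<and> Y \<subseteq> center G" for Y
  proof
    assume a: "subgroup Y ?Zs"
    have "subgroup Y G" by (rule incl_subgroup[OF subgroup_center a])
    moreover have "Y \<subseteq> center G" using subgroup.subset[OF a] by simp
    ultimately show "subgroup Y G \<and> Y \<subseteq> center G" by simp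
  next
    assume "subgroup Y G \<and> Y \<subseteq> center G"
    then show "subgroup Y ?Zs" using subgroup_incl[OF _ subgroup_center] by blast
  qed
  have cjZ: "conj_set ?Zs g Y = conj_set G g Y" if "g \<in> center G" for g Y
    unfolding conj_set_def using that subgroup_center by simp
  have norm: "normalizer ?Zs Y = center G" if "Y \<subseteq> center G" for Y
  proof -
    have "normalizer ?Zs Y = {g \<in> center G. conj_set ?Zs g Y = Y}"
      using group.normalizer_eq[OF grp, of Y] that by simp
    also have "\<dots> = center G" using cjZ conj_set_central that center_carrier by auto
    finally show ?thesis .
  qed
  have cc: "conj_class ?Zs Y = {Y}" if "Y \<subseteq> center G" for Y
  proof -
    have "conj_class ?Zs Y = (\<lambda>g. conj_set ?Zs g Y) ` center G"
      using group.conj_class_eq_image[OF grp, of Y] by simp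
    also have "\<dots> = {Y}" using cjZ conj_set_central that center_carrier one_closed
      using subgroup_center subgroup.one_closed by fastforce
    finally show ?thesis .
  qed
  have nsn: "nsn_subgroups ?Zs = central_subgroups G - {center G}"
    unfolding nsn_subgroups_def central_subgroups_def using sub_iff norm by auto
  have "inj_on (conj_class ?Zs) (central_subgroups G - {center G})"
    by (rule inj_onI) (auto simp: central_subgroups_def cc)
  then show ?thesis unfolding DD_def nsn by (rule card_image)
qed

lemma group_mod_center: "group (G Mod center G)"
  using normal.factorgroup_is_group[OF center_normal] .

lemma hom_mod_center: "group_hom G (G Mod center G) (\<lambda>a. center G #> a)"
  using normal.r_coset_hom_Mod[OF center_normal] group_mod_center is_group
  by (simp add: group_hom_def group_hom_axioms_def)

lemma carrier_mod_center: "carrier (G Mod center G) = (\<lambda>x. center G #> x) ` carrier G"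
  by (rule carrier_FactGroup)

lemma image_mod_center_subset: "Y \<subseteq> carrier G \<Longrightarrow> image_mod_center G Y \<subseteq> carrier (G Mod center G)"
  unfolding image_mod_center_def carrier_mod_center by auto

lemma inv_mod_center: "g \<in> carrier G \<Longrightarrow> inv\<^bsub>G Mod center G\<^esub> (center G #> g) = center G #> inv g"
proof -
  assume g: "g \<in> carrier G"
  have "center G #> g \<in> carrier (G Mod center G)" using g carrier_mod_center by auto
  then have "inv\<^bsub>G Mod center G\<^esub> (center G #> g) = set_inv (center G #> g)"
    using normal.inv_FactGroup[OF center_normal] by blast
  also have "\<dots> = center G #> inv g" using normal.rcos_inv[OF center_normal g] .
  finally show ?thesis .
qed

lemma conj_set_image_mod_center: "g \<in> carrier G \<Longrightarrow> Y \<subseteq> carrier G \<Longrightarrow>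
   conj_set (G Mod center G) (center G #> g) (image_mod_center G Y) = image_mod_center G (conj_set G g Y)"
proof -
  assume g: "g \<in> carrier G" and Y: "Y \<subseteq> carrier G"
  have "\<And>y. y \<in> Y \<Longrightarrow> (center G #> g) \<otimes>\<^bsub>G Mod center G\<^esub> (center G #> y) \<otimes>\<^bsub>G Mod center G\<^esub>
        inv\<^bsub>G Mod center G\<^esub> (center G #> g) = center G #> (g \<otimes> y \<otimes> inv g)"
  proof -
    fix y assume "y \<in> Y"
    then have y: "y \<in> carrier G" using Y by auto
    have "(center G #> g) <#> (center G #> y) <#> (center G #> inv g) = center G #> (g \<otimes> y \<otimes> inv g)"
      using g y by (simp add: normal.rcos_sum[OF center_normal])
    then show "?thesis y" using g y by (simp add: inv_mod_center)
  qed
  then show ?thesis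
    unfolding conj_set_def image_mod_center_def image_image by (auto intro: image_cong)
qed

lemma subgroup_image_mod_center: "subgroup Y G \<Longrightarrow> subgroup (image_mod_center G Y) (G Mod center G)"
  unfolding image_mod_center_def using group_hom.subgroup_img_is_subgroup[OF hom_mod_center] by blast

lemma Union_image_mod_center: "subgroup Y G \<Longrightarrow> center G \<subseteq> Y \<Longrightarrow> \<Union>(image_mod_center G Y) = Y"
proof
  assume Y: "subgroup Y G" and ZY: "center G \<subseteq> Y"
  show "\<Union>(image_mod_center G Y) \<subseteq> Y"
  proof
    fix x assume "x \<in> \<Union>(image_mod_center G Y)"
    then obtain y z where yz: "y \<in> Y" "z \<in> center G" "x = z \<otimes> y"
      unfolding image_mod_center_def r_coset_def by auto
    have "z \<in> Y" using yz(2) ZY by auto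
    then show "x \<in> Y" using yz(1,3) subgroup.m_closed[OF Y] by simp
  qed
  show "Y \<subseteq> \<Union>(image_mod_center G Y)"
  proof
    fix y assume y: "y \<in> Y"
    then have "y \<in> center G #> y" using rcos_self subgroup_center Y subgroup.subset by blast
    then show "y \<in> \<Union>(image_mod_center G Y)" using y unfolding image_mod_center_def by auto
  qed
qed

lemma image_mod_center_inj: "subgroup Y1 G \<Longrightarrow> center G \<subseteq> Y1 \<Longrightarrow> subgroup Y2 G \<Longrightarrow> center G \<subseteq> Y2 \<Longrightarrow>
   image_mod_center G Y1 = image_mod_center G Y2 \<Longrightarrow> Y1 = Y2"
  using Union_image_mod_center by metis

lemma image_mod_center_center: "image_mod_center G (center G) = {center G}"
  unfolding image_mod_center_def
  using coset_join2 subgroup_center center_carrier subgroup.one_closed by fastforce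

lemma mem_if_coset_mem_image_mod_center:
  "subgroup Y G \<Longrightarrow> center G \<subseteq> Y \<Longrightarrow> g \<in> carrier G \<Longrightarrow> center G #> g \<in> image_mod_center G Y \<Longrightarrow>
    g \<in> Y"
proof -
  assume Y: "subgroup Y G" "center G \<subseteq> Y" and g: "g \<in> carrier G"
    and "center G #> g \<in> image_mod_center G Y"
  then have "g \<in> \<Union>(image_mod_center G Y)" using rcos_self[OF g subgroup_center] by blast
  then show "g \<in> Y" using Union_image_mod_center Y by blast
qed

lemma image_mod_center_nsn:
  assumes Y: "Y \<in> nsn_over_center G" shows "image_mod_center G Y \<in> nsn_subgroups (G Mod center G)"
proof -
  have Y1: "subgroup Y G" "center G \<subseteq> Y" "\<not> Y \<subseteq> center G" "normalizer G Y \<noteq> Y"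
    using Y unfolding nsn_over_center_def by auto
  have Yc: "Y \<subseteq> carrier G" using Y1 subgroup.subset by blast
  have sQ: "subgroup (image_mod_center G Y) (G Mod center G)"
    using subgroup_image_mod_center Y1 by blast
  obtain y where y: "y \<in> Y" "y \<notin> center G" using Y1 by auto
  have "center G #> y \<noteq> center G"
    using rcos_self[OF _ subgroup_center, of y] y Yc by auto
  then have ne: "image_mod_center G Y \<noteq> {\<one>\<^bsub>G Mod center G\<^esub>}"
    using y unfolding image_mod_center_def by auto
  obtain g where g: "g \<in> normalizer G Y" "g \<notin> Y"
    using subgroup_subset_normalizer[OF Y1(1)] Y1(4) by blast
  have gc: "g \<in> carrier G" "conj_set G g Y = Y" using g normalizer_eq Yc by auto
  have "center G #> g \<in> normalizer (G Mod center G) (image_mod_center G Y)"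
    using group.normalizer_eq[OF group_mod_center image_mod_center_subset[OF Yc]] conj_set_image_mod_center[OF gc(1) Yc] gc carrier_mod_center
      by auto
  moreover have "center G #> g \<notin> image_mod_center G Y"
    using mem_if_coset_mem_image_mod_center Y1 gc g by blast
  ultimately have "normalizer (G Mod center G) (image_mod_center G Y) \<noteq> image_mod_center G Y"
    by blast
  then show ?thesis using sQ ne unfolding nsn_subgroups_def by auto
qed

lemma image_mod_center_Union:
  assumes A: "subgroup A (G Mod center G)"
  shows "image_mod_center G (\<Union>A) = A" and "center G \<subseteq> \<Union>A"
proof -
  interpret N: normal "center G" G using center_normal .
  have char: "\<Union>A = {x \<in> carrier G. center G #> x \<in> A}" using N.factgroup_subgroup_union_char A .
  have "A \<subseteq> carrier (G Mod center G)" using A subgroup.subset by blast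
  then have "A \<subseteq> image_mod_center G (\<Union>A)"
    unfolding image_mod_center_def carrier_mod_center using char by blast
  then show "image_mod_center G (\<Union>A) = A" unfolding image_mod_center_def using char by auto
  have "\<one>\<^bsub>G Mod center G\<^esub> \<in> A" using A subgroup.one_closed by blast
  then show "center G \<subseteq> \<Union>A" by auto
qed

lemma Union_nsn_over_center:
  assumes A: "A \<in> nsn_subgroups (G Mod center G)" shows "\<Union>A \<in> nsn_over_center G"
proof -
  have A1: "subgroup A (G Mod center G)" "A \<noteq> {\<one>\<^bsub>G Mod center G\<^esub>}"
    "normalizer (G Mod center G) A \<noteq> A" using A unfolding nsn_subgroups_def by auto
  let ?Y = "\<Union>A"
  have sY: "subgroup ?Y G" using normal.factgroup_subgroup_union_subgroup[OF center_normal A1(1)] .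
  have Yc: "?Y \<subseteq> carrier G" using sY subgroup.subset by blast
  note image_Y = image_mod_center_Union[OF A1(1)]
  have nZ: "\<not> ?Y \<subseteq> center G"
  proof
    assume "?Y \<subseteq> center G"
    then have "A = {center G}" using image_Y image_mod_center_center by auto
    then show False using A1(2) by simp
  qed
  obtain a where a: "a \<in> normalizer (G Mod center G) A" "a \<notin> A"
    using group.subgroup_subset_normalizer[OF group_mod_center A1(1)] A1(3) by blast
  have a2: "a \<in> carrier (G Mod center G)" "conj_set (G Mod center G) a A = A"
    using a group.normalizer_eq[OF group_mod_center subgroup.subset[OF A1(1)]] by auto
  then obtain g where g: "g \<in> carrier G" "a = center G #> g" using carrier_mod_center by auto
  have "image_mod_center G (conj_set G g ?Y) = image_mod_center G ?Y"
    using conj_set_image_mod_center[OF g(1) Yc] a2 g image_Y by simp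
  then have "conj_set G g ?Y = ?Y"
    using image_mod_center_inj subgroup_conj_set[OF sY g(1)] center_subset_conj_set_iff[OF g(1) Yc] image_Y sY
    by blast
  then have "g \<in> normalizer G ?Y" using normalizer_eq Yc g by auto
  moreover have "g \<notin> ?Y" using a g image_Y unfolding image_mod_center_def by auto
  ultimately have "normalizer G ?Y \<noteq> ?Y" by blast
  then show ?thesis using sY image_Y nZ unfolding nsn_over_center_def by auto
qed

lemma nsn_over_center_conjugate:
  assumes f: "finite (carrier G)" and DQ: "DD (G Mod center G) = 1"
    and Y1: "Y1 \<in> nsn_over_center G" and Y2: "Y2 \<in> nsn_over_center G"
  shows "\<exists>g\<in>carrier G. Y1 = conj_set G g Y2"
proof -
  let ?Q = "G Mod center G"
  have c1: "conj_class ?Q (image_mod_center G Y1) \<in> conj_class ?Q ` nsn_subgroups ?Q"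
    using image_mod_center_nsn[OF Y1] by blast
  have c2: "conj_class ?Q (image_mod_center G Y2) \<in> conj_class ?Q ` nsn_subgroups ?Q"
    using image_mod_center_nsn[OF Y2] by blast
  have "card (conj_class ?Q ` nsn_subgroups ?Q) = 1" using DQ unfolding DD_def .
  then obtain c where "conj_class ?Q ` nsn_subgroups ?Q = {c}" using card_1_singletonE by blast
  then have eq: "conj_class ?Q (image_mod_center G Y1) = conj_class ?Q (image_mod_center G Y2)"
    using c1 c2 by auto
  have s1: "subgroup Y1 G" "center G \<subseteq> Y1" and s2: "subgroup Y2 G" "center G \<subseteq> Y2"
    using Y1 Y2 unfolding nsn_over_center_def by auto
  have Yc: "Y1 \<subseteq> carrier G" "Y2 \<subseteq> carrier G"
    using subgroup.subset[OF s1(1)] subgroup.subset[OF s2(1)] by auto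
  obtain a where a: "a \<in> carrier ?Q" "image_mod_center G Y1 = conj_set ?Q a (image_mod_center G Y2)"
    using group.conj_class_eq_iff[OF group_mod_center image_mod_center_subset[OF Yc(1)] image_mod_center_subset[OF Yc(2)]] eq
      by blast
  then obtain g where g: "g \<in> carrier G" "a = center G #> g" using carrier_mod_center by auto
  have "image_mod_center G Y1 = image_mod_center G (conj_set G g Y2)"
    using a g conj_set_image_mod_center Yc by simp
  then have "Y1 = conj_set G g Y2"
    using image_mod_center_inj s1 subgroup_conj_set[OF s2(1) g(1)] center_subset_conj_set_iff[OF g(1) Yc(2)] s2
      by blast
  then show ?thesis using g by blast
qed

lemma nsn_over_center_nonempty:
  assumes DQ: "DD (G Mod center G) = 1" shows "nsn_over_center G \<noteq> {}"
proof -
  have "nsn_subgroups (G Mod center G) \<noteq> {}" using DQ unfolding DD_def by auto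
  then show ?thesis using Union_nsn_over_center by blast
qed


lemma center_ne_carrier_if_DD_quotient:
  assumes "DD (G Mod center G) \<noteq> 0" shows "center G \<noteq> carrier G"
proof
  assume ZG: "center G = carrier G"
  have "center G #> x = center G" if "x \<in> carrier G" for x
    using coset_join2 subgroup_center ZG that by blast
  then have Q: "carrier (G Mod center G) = {center G}"
    unfolding carrier_mod_center using one_closed by blast
  have "nsn_subgroups (G Mod center G) = {}"
  proof (rule ccontr)
    assume "nsn_subgroups (G Mod center G) \<noteq> {}"
    then obtain A where A: "subgroup A (G Mod center G)" "A \<noteq> {\<one>\<^bsub>G Mod center G\<^esub>}"
      unfolding nsn_subgroups_def by auto
    have "A \<subseteq> {center G}" using subgroup.subset[OF A(1)] Q by simp
    moreover have "center G \<in> A" using subgroup.one_closed[OF A(1)] by simp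
    ultimately show False using A(2) by auto
  qed
  then show False using assms unfolding DD_def by simp
qed

lemma card_conj_classes_nsn_over_center:
  assumes fin: "finite (carrier G)" and DQ: "DD (G Mod center G) = 1"
  shows "card (conj_class G ` nsn_over_center G) = 1"
proof -
  obtain Y0 where Y0: "Y0 \<in> nsn_over_center G" using nsn_over_center_nonempty[OF DQ] by auto
  have "conj_class G ` nsn_over_center G = {conj_class G Y0}"
  proof (intro equalityI subsetI)
    fix c assume "c \<in> conj_class G ` nsn_over_center G"
    then obtain Y where Y: "Y \<in> nsn_over_center G" "c = conj_class G Y" by auto
    have "Y \<subseteq> carrier G" "Y0 \<subseteq> carrier G"
      using Y(1) Y0 subgroup.subset unfolding nsn_over_center_def by auto
    then show "c \<in> {conj_class G Y0}"
      using nsn_over_center_conjugate[OF fin DQ Y(1) Y0] conj_class_eq_iff Y(2) by auto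
  qed (use Y0 in auto)
  then show ?thesis by simp
qed

text \<open>Counting: \<open>\<D>(G) = |central| + 1 + #(incomparable classes)\<close> while \<open>\<D>(Z)\<close> counts the
  central subgroups other than \<open>Z\<close>.\<close>

lemma DD_center_incomparable:
  assumes fin: "finite (carrier G)"
    and DD_diff: "int (DD G) - int (DD (G\<lparr>carrier := center G\<rparr>)) = 3"
    and DQ: "DD (G Mod center G) = 1"
  shows "center G \<noteq> {\<one>}" and "card (conj_class G ` center_incomparable G) = 1"
proof -
  have ZG: "center G \<noteq> carrier G" using center_ne_carrier_if_DD_quotient DQ by simp
  have split: "DD G = card (central_subgroups G) + 1 + card (conj_class G ` center_incomparable G)"
    using DD_split[OF fin ZG] card_conj_class_central_subgroups card_conj_classes_nsn_over_center[OF fin DQ]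
    by simp
  have fin_central: "finite (central_subgroups G)"
  proof -
    have "central_subgroups G \<subseteq> Pow (carrier G)" unfolding central_subgroups_def
      using subgroup.subset by auto
    then show ?thesis using fin finite_subset by blast
  qed
  have "card (central_subgroups G) \<le> card (central_subgroups G - {center G}) + 1"
    using diff_card_le_card_Diff[of "{center G}" "central_subgroups G"] by simp
  then have "card (conj_class G ` center_incomparable G) \<ge> 1"
    using DD_diff split DD_center by linarith
  then have "center_incomparable G \<noteq> {}" by (cases "center_incomparable G = {}") auto
  then obtain Y where "subgroup Y G" "\<not> center G \<subseteq> Y" unfolding center_incomparable_def by blast
  then show Z1: "center G \<noteq> {\<one>}" using subgroup.one_closed by fastforce
  then have "center G \<in> central_subgroups G" unfolding central_subgroups_def
    using subgroup_center by auto
  then have "card (central_subgroups G - {center G}) + 1 = card (central_subgroups G)"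
    using card.remove[OF fin_central] by simp
  then show "card (conj_class G ` center_incomparable G) = 1"
    using DD_diff split DD_center by linarith
qed

end

section \<open>The hypotheses on \<open>\<D>\<close>\<close>

locale DD_group = group G for G (structure) +
  assumes finite_carrier: "finite (carrier G)"
    and DD_diff: "int (DD G) - int (DD (G\<lparr>carrier := center G\<rparr>)) = 3"
    and DD_quotient: "DD (G Mod center G) = 1"
begin

lemma center_ne_carrier: "center G \<noteq> carrier G"
  using center_ne_carrier_if_DD_quotient DD_quotient by simp

lemma center_nontrivial: "center G \<noteq> {\<one>}"
  using DD_center_incomparable(1)[OF finite_carrier DD_diff DD_quotient] .

lemma incomparable_conjugate:
  assumes Y1: "Y1 \<in> center_incomparable G" and Y2: "Y2 \<in> center_incomparable G"
  shows "\<exists>g\<in>carrier G. Y1 = conj_set G g Y2"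
proof -
  obtain c where "conj_class G ` center_incomparable G = {c}"
    using DD_center_incomparable(2)[OF finite_carrier DD_diff DD_quotient] card_1_singletonE
      by blast
  then have "conj_class G Y1 = conj_class G Y2" using Y1 Y2 by blast
  moreover have "Y1 \<subseteq> carrier G" "Y2 \<subseteq> carrier G"
    using Y1 Y2 subgroup.subset unfolding center_incomparable_def by auto
  ultimately show ?thesis using conj_class_eq_iff by blast
qed

lemma nsn_over_centerI:
  "subgroup Y G \<Longrightarrow> center G \<subseteq> Y \<Longrightarrow> \<not> Y \<subseteq> center G \<Longrightarrow> normalizer G Y \<noteq> Y \<Longrightarrow> Y \<in> nsn_over_center G"
  unfolding nsn_over_center_def by blast

lemma center_incomparableI:
  "subgroup Y G \<Longrightarrow> \<not> Y \<subseteq> center G \<Longrightarrow> \<not> center G \<subseteq> Y \<Longrightarrow> Y \<in> center_incomparable G"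
  unfolding center_incomparable_def by blast

lemma subgroup_finite: "subgroup Y G \<Longrightarrow> finite Y"
  using finite_subgroup[OF finite_carrier] .

lemma finite_center: "finite (center G)"
  using subgroup_finite[OF subgroup_center] .

lemma card_incomparable_eq:
  "Y1 \<in> center_incomparable G \<Longrightarrow> Y2 \<in> center_incomparable G \<Longrightarrow> card Y1 = card Y2"
  using incomparable_conjugate card_conj_set subgroup.subset unfolding center_incomparable_def
  by (metis (no_types, lifting) mem_Collect_eq)

lemma card_over_center_eq: "Y1 \<in> nsn_over_center G \<Longrightarrow> Y2 \<in> nsn_over_center G \<Longrightarrow> card Y1 = card Y2"
  using nsn_over_center_conjugate[OF finite_carrier DD_quotient] card_conj_set subgroup.subset
  unfolding nsn_over_center_def by (metis (no_types, lifting) mem_Collect_eq)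

lemma incomparable_minimal:
  assumes Y: "Y \<in> center_incomparable G" and Y': "subgroup Y' G" "Y' \<subseteq> Y" "\<not> Y' \<subseteq> center G"
  shows "Y' = Y"
proof -
  have "Y' \<in> center_incomparable G" using Y Y' unfolding center_incomparable_def by blast
  then have "card Y' = card Y" using card_incomparable_eq Y by blast
  moreover have "finite Y" using Y subgroup_finite unfolding center_incomparable_def by blast
  ultimately show ?thesis using card_subset_eq Y'(2) by blast
qed

lemma incomparable_cyclic:
  assumes Y: "Y \<in> center_incomparable G" and y: "y \<in> Y" "y \<notin> center G"
  shows "generate G {y} = Y"
proof -
  have sY: "subgroup Y G" using Y unfolding center_incomparable_def by blast
  have yc: "y \<in> carrier G" using y subgroup.subset[OF sY] by auto
  show ?thesis
    using incomparable_minimal[OF Y subgroup_cyclic[OF yc] cyclic_subset[OF sY y(1)]] mem_cyclic[OF yc] y(2)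
    by blast
qed

lemma incomparable_generator:
  assumes "Y \<in> center_incomparable G" obtains y where "y \<in> Y" "y \<notin> center G" "generate G {y} = Y"
  using assms incomparable_cyclic unfolding center_incomparable_def by blast

lemma card_carrier_pos: "card (carrier G) > 0"
  using finite_carrier one_closed card_gt_0_iff by blast

lemma card_index_center: "card (rcosets (center G)) * card (center G) = card (carrier G)"
  using lagrange[OF subgroup_center] unfolding order_def .

lemma card_center_gt_1: "card (center G) > 1"
proof -
  have "card (center G) \<noteq> 1"
    using center_nontrivial subgroup.one_closed[OF subgroup_center]
      by (metis card_1_singletonE singletonD)
  moreover have "card (center G) \<noteq> 0"
    using finite_center subgroup.one_closed[OF subgroup_center] by auto
  ultimately show ?thesis by linarith
qed

lemma index_center_gt_1: "card (rcosets (center G)) > 1"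
proof -
  have "card (rcosets (center G)) \<noteq> 1"
    using card_index_center card_subset_eq[OF finite_carrier subgroup.subset[OF subgroup_center]]
      center_ne_carrier by auto
  moreover have "card (rcosets (center G)) \<noteq> 0"
    using card_index_center card_carrier_pos by (metis mult_0 less_irrefl)
  ultimately show ?thesis by linarith
qed

lemma exists_sylow:
  assumes "Factorial_Ring.prime p"
  obtains R where "subgroup R G" "card R = p ^ multiplicity p (card (carrier G))"
proof -
  obtain m where "card (carrier G) = p ^ multiplicity p (card (carrier G)) * m"
    using multiplicity_dvd by blast
  then show thesis
    using sylow_thm[OF assms is_group _ finite_carrier] that unfolding order_def by blast
qed

lemma multiplicity_card_carrier:
  assumes "Factorial_Ring.prime p"
  shows "multiplicity p (card (carrier G))
    = multiplicity p (card (center G)) + multiplicity p (card (rcosets (center G)))"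
proof -
  have "card (center G) \<noteq> 0" "card (rcosets (center G)) \<noteq> 0"
    using card_center_gt_1 index_center_gt_1 by auto
  then show ?thesis
    using prime_elem_multiplicity_mult_distrib[OF prime_imp_prime_elem[OF assms]] card_index_center
    by (metis mult.commute)
qed

lemma sylow_not_subset_center:
  assumes t: "Factorial_Ring.prime t" and t_dvd: "t dvd card (rcosets (center G))"
    and R: "subgroup R G" "card R = t ^ multiplicity t (card (carrier G))"
  shows "\<not> R \<subseteq> center G"
proof
  assume "R \<subseteq> center G"
  then have "t ^ multiplicity t (card (carrier G)) dvd card (center G)"
    using card_subgroup_dvd[OF R(1) subgroup_center _ finite_center] R(2) by simp
  then have "multiplicity t (card (carrier G)) \<le> multiplicity t (card (center G))"
    using card_center_gt_1 t not_prime_unit by (intro multiplicity_geI) auto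
  moreover have "multiplicity t (card (rcosets (center G))) > 0"
    using prime_multiplicity_gt_zero_iff[OF prime_imp_prime_elem[OF t]] t_dvd index_center_gt_1
      by simp
  ultimately show False using multiplicity_card_carrier[OF t] by simp
qed

lemma cyclic_mult_center_over_center:
  assumes x: "x \<in> carrier G" "x \<notin> center G"
    and grows: "normalizer G (generate G {x} <#> center G) \<noteq> generate G {x} <#> center G"
  shows "generate G {x} <#> center G \<in> nsn_over_center G"
  using subgroup_cyclic_mult_center[OF x(1)] center_subset_cyclic_mult_center[OF x(1)]
    mem_cyclic_mult_center[OF x(1)] x(2) grows unfolding nsn_over_center_def by blast

text \<open>If \<open>G\<close> were a p-group, every \<open>\<langle>x\<rangle>Z\<close> with \<open>x\<close> noncentral would be a non-self-normalizing
  subgroup above the center; as these are all conjugate and of equal order, \<open>\<langle>x\<rangle>Z\<close> would be normal,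
  and then equal to every \<open>\<langle>y\<rangle>Z\<close>.\<close>

lemma not_prime_power_order:
  assumes t: "Factorial_Ring.prime t" shows "card (carrier G) \<noteq> t ^ k"
proof
  assume card_G: "card (carrier G) = t ^ k"
  define A where "A y = generate G {y} <#> center G" for y
  have grows: "normalizer G H \<noteq> H" if "subgroup H G" "H \<noteq> carrier G" for H
    using normalizer_ne_if_prime_power_order[OF finite_carrier t card_G that] .
  have A_over: "A y \<in> nsn_over_center G" if y: "y \<in> carrier G" "y \<notin> center G" for y
  proof -
    have "normalizer G (A y) \<noteq> A y"
      using grows subgroup_cyclic_mult_center[OF y(1)]
        cyclic_mult_center_ne_carrier[OF y(1) finite_carrier center_ne_carrier]
          unfolding A_def by blast
    then show ?thesis using cyclic_mult_center_over_center[OF y] unfolding A_def by blast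
  qed
  have "center G \<subset> carrier G" using center_ne_carrier subgroup.subset[OF subgroup_center] by blast
  then obtain x where x: "x \<in> carrier G" "x \<notin> center G" by blast
  have sA: "subgroup (A x) G" unfolding A_def using subgroup_cyclic_mult_center[OF x(1)] .
  have normal_A: "normalizer G (A x) = carrier G"
  proof (rule ccontr)
    let ?N = "normalizer G (A x)"
    assume N: "?N \<noteq> carrier G"
    have sN: "subgroup ?N G" using normalizer_imp_subgroup[OF subgroup.subset[OF sA]] .
    have AN: "A x \<subseteq> ?N" using subgroup_subset_normalizer[OF sA] .
    have "\<not> ?N \<subseteq> center G" using AN mem_cyclic_mult_center[OF x(1)] x(2) unfolding A_def by blast
    moreover have "center G \<subseteq> ?N"
      using AN center_subset_cyclic_mult_center[OF x(1)] unfolding A_def by blast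
    ultimately have "?N \<in> nsn_over_center G" using nsn_over_centerI[OF sN] grows[OF sN N] by blast
    then have "card ?N = card (A x)" using card_over_center_eq A_over[OF x] by blast
    then have "?N = A x" using card_subset_eq[OF subgroup_finite[OF sN] AN] by simp
    then show False
      using grows[OF sA] cyclic_mult_center_ne_carrier[OF x(1) finite_carrier center_ne_carrier]
      unfolding A_def by blast
  qed
  obtain y where y: "y \<in> carrier G" "y \<notin> A x"
    using cyclic_mult_center_ne_carrier[OF x(1) finite_carrier center_ne_carrier] subgroup.subset[OF sA]
    unfolding A_def by blast
  have "y \<notin> center G" using y center_subset_cyclic_mult_center[OF x(1)] unfolding A_def by blast
  then obtain h where h: "h \<in> carrier G" "A y = conj_set G h (A x)"
    using nsn_over_center_conjugate[OF finite_carrier DD_quotient A_over[OF y(1)] A_over[OF x]] y(1)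
      by blast
  have "conj_set G h (A x) = A x"
    using h(1) normal_A normalizer_eq[OF subgroup.subset[OF sA]] by blast
  then show False using h(2) y mem_cyclic_mult_center[OF y(1)] unfolding A_def by simp
qed

lemma exists_sylow_incomparable:
  "\<exists>r R. Factorial_Ring.prime r \<and> r dvd card (rcosets (center G)) \<and> subgroup R G
     \<and> card R = r ^ multiplicity r (card (carrier G)) \<and> R \<in> center_incomparable G"
proof (rule ccontr)
  assume none: "\<not> ?thesis"
  have center_power: "\<exists>c. card (center G) = p ^ c"
    if p: "Factorial_Ring.prime p" "p dvd card (rcosets (center G))" for p
  proof -
    obtain R where R: "subgroup R G" "card R = p ^ multiplicity p (card (carrier G))"
      using exists_sylow[OF p(1)] by blast
    have "center G \<subseteq> R"
    proof (rule ccontr)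
      assume "\<not> center G \<subseteq> R"
      then have "R \<in> center_incomparable G"
        using center_incomparableI[OF R(1) sylow_not_subset_center[OF p R]] by blast
      then show False using none p R by blast
    qed
    then show ?thesis
      using card_subgroup_prime_power[OF finite_carrier p(1) subgroup_center R(1) _ R(2)] by metis
  qed
  obtain t where t: "Factorial_Ring.prime t" "t dvd card (rcosets (center G))"
    using prime_factor_nat[of "card (rcosets (center G))"] index_center_gt_1 by auto
  obtain c where c: "card (center G) = t ^ c" using center_power[OF t] by blast
  have "c \<noteq> 0" using c card_center_gt_1 by (cases c) auto
  then have t_dvd_Z: "t dvd card (center G)" using c by simp
  have "p = t" if p: "Factorial_Ring.prime p" "p dvd card (carrier G)" for p
  proof (rule ccontr)
    assume pt: "p \<noteq> t"
    have "\<not> p dvd card (center G)"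
    proof
      assume "p dvd card (center G)"
      then have "p dvd t" using c p(1) prime_dvd_power by metis
      then show False using pt p(1) t(1) primes_dvd_imp_eq by blast
    qed
    then have "p dvd card (rcosets (center G))"
      using p card_index_center prime_dvd_mult_iff by metis
    then obtain c' where "card (center G) = p ^ c'" using center_power[OF p(1)] by blast
    then have "t dvd p" using t_dvd_Z t(1) prime_dvd_power by metis
    then show False using pt p(1) t(1) primes_dvd_imp_eq by blast
  qed
  then have "card (carrier G) = t ^ multiplicity t (card (carrier G))"
    using prime_power_if_unique_prime_factor[OF card_carrier_pos t(1)] by blast
  then show False using not_prime_power_order[OF t(1)] by blast
qed

context
  fixes r R
  assumes r: "Factorial_Ring.prime r" and r_dvd: "r dvd card (rcosets (center G))"
    and sR: "subgroup R G" and card_R: "card R = r ^ multiplicity r (card (carrier G))"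
    and R_inc: "R \<in> center_incomparable G"
begin

lemma multiplicity_sylow_pos: "multiplicity r (card (carrier G)) \<ge> 1"
proof -
  have "r dvd card (carrier G)" using r_dvd card_index_center by (metis dvd_mult2)
  then show ?thesis
    using prime_multiplicity_gt_zero_iff[OF prime_imp_prime_elem[OF r]] card_carrier_pos
    by (simp add: Suc_le_eq)
qed

text \<open>The \<open>r\<close>-th power of a generator of \<open>R\<close> generates a proper, hence central, subgroup.\<close>

lemma sylow_pow_central:
  obtains w where "w \<in> carrier G" "generate G {w} \<subseteq> R" "generate G {w} \<subseteq> center G"
    "card (generate G {w}) = r ^ (multiplicity r (card (carrier G)) - 1)"
proof -
  let ?\<alpha> = "multiplicity r (card (carrier G))"
  obtain y where y: "y \<in> R" "y \<notin> center G" "generate G {y} = R"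
    using incomparable_generator[OF R_inc] .
  have yc: "y \<in> carrier G" using y(1) subgroup.subset[OF sR] by auto
  have oy: "ord y = r ^ ?\<alpha>" using card_cyclic[OF yc] y(3) card_R by simp
  define w where "w = y [^] r"
  have wc: "w \<in> carrier G" unfolding w_def using yc by simp
  have cw: "card (generate G {w}) = r ^ (?\<alpha> - 1)"
    using card_cyclic[OF wc] ord_pow_prime_power[OF yc r oy, of 1] multiplicity_sylow_pos
    unfolding w_def by simp
  have wR: "generate G {w} \<subseteq> R"
    using cyclic_subset[OF sR subgroup_nat_pow_closed[OF sR y(1)]] unfolding w_def .
  have "generate G {w} \<subseteq> center G"
  proof (rule ccontr)
    assume "\<not> generate G {w} \<subseteq> center G"
    then have "generate G {w} = R"
      using incomparable_minimal[OF R_inc subgroup_cyclic[OF wc] wR] by simp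
    then have "r ^ (?\<alpha> - 1) = r ^ ?\<alpha>" using cw card_R by simp
    moreover have "r ^ (?\<alpha> - 1) < r ^ ?\<alpha>"
      using multiplicity_sylow_pos prime_gt_1_nat[OF r] by (simp add: power_strict_increasing_iff)
    ultimately show False by simp
  qed
  then show thesis using that wc wR cw by blast
qed

lemma exists_other_prime_dvd_index:
  "\<exists>t. Factorial_Ring.prime t \<and> t dvd card (rcosets (center G)) \<and> t \<noteq> r"
proof (rule ccontr)
  assume "\<not> ?thesis"
  then have idx: "card (rcosets (center G)) = r ^ multiplicity r (card (rcosets (center G)))"
    using prime_power_if_unique_prime_factor[OF _ r] index_center_gt_1 by auto
  have "multiplicity r (card (rcosets (center G))) \<noteq> 0"
    using idx index_center_gt_1 by (metis power_0 less_irrefl)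
  moreover have "multiplicity r (card (rcosets (center G))) \<noteq> 1"
    using idx index_center_not_prime[OF finite_carrier center_ne_carrier] r
      by (metis power_one_right)
  ultimately have k2: "multiplicity r (card (rcosets (center G))) \<ge> 2" by linarith
  obtain w where w: "w \<in> carrier G" "generate G {w} \<subseteq> R" "generate G {w} \<subseteq> center G"
    "card (generate G {w}) = r ^ (multiplicity r (card (carrier G)) - 1)"
    by (rule sylow_pow_central)
  have "r ^ (multiplicity r (card (carrier G)) - 1) dvd card (center G)"
    using card_subgroup_dvd[OF subgroup_cyclic[OF w(1)] subgroup_center w(3) finite_center] w(4)
      by simp
  then have "multiplicity r (card (carrier G)) - 1 \<le> multiplicity r (card (center G))"
    using card_center_gt_1 r not_prime_unit by (intro multiplicity_geI) auto
  then show False using multiplicity_card_carrier[OF r] k2 multiplicity_sylow_pos by linarith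
qed

context
  fixes t assumes t: "Factorial_Ring.prime t" "t dvd card (rcosets (center G))" "t \<noteq> r"
begin

lemma center_power_of_other_prime: "\<exists>c. card (center G) = t ^ c"
proof -
  obtain R' where R': "subgroup R' G" "card R' = t ^ multiplicity t (card (carrier G))"
    using exists_sylow[OF t(1)] by blast
  have "center G \<subseteq> R'"
  proof (rule ccontr)
    assume "\<not> center G \<subseteq> R'"
    then have "R' \<in> center_incomparable G"
      using center_incomparableI[OF R'(1) sylow_not_subset_center[OF t(1,2) R']] by blast
    then have "r ^ multiplicity r (card (carrier G)) = t ^ multiplicity t (card (carrier G))"
      using card_incomparable_eq R_inc card_R R'(2) by metis
    then have "t = r" using prime_eq_if_powers_eq[OF t(1) r] multiplicity_sylow_pos by metis
    then show False using t(3) by simp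
  qed
  then show ?thesis
    using card_subgroup_prime_power[OF finite_carrier t(1) subgroup_center R'(1) _ R'(2)] by metis
qed

lemma sylow_inter_center: "R \<inter> center G = {\<one>}"
proof -
  obtain c where "card (center G) = t ^ c" using center_power_of_other_prime by blast
  moreover have "coprime r t" using primes_coprime[OF r t(1)] t(3) by simp
  ultimately have "coprime (card R) (card (center G))" using card_R by simp
  then show ?thesis
    using inter_eq_one_if_coprime_card[OF finite_carrier sR subgroup_center] by blast
qed

lemma card_sylow_eq_prime: "card R = r"
proof -
  obtain w where w: "w \<in> carrier G" "generate G {w} \<subseteq> R" "generate G {w} \<subseteq> center G"
    "card (generate G {w}) = r ^ (multiplicity r (card (carrier G)) - 1)"
    by (rule sylow_pow_central)
  have "generate G {w} \<subseteq> {\<one>}" using w(2,3) sylow_inter_center by blast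
  then have "card (generate G {w}) \<le> 1" using card_mono[of "{\<one>}"] by simp
  then have "\<not> 0 < multiplicity r (card (carrier G)) - 1"
    using w(4) one_less_power[OF prime_gt_1_nat[OF r]] by (metis not_less)
  then have "multiplicity r (card (carrier G)) = 1" using multiplicity_sylow_pos by linarith
  then show ?thesis using card_R by simp
qed

text \<open>If \<open>|Z| = t^c\<close> with \<open>c \<ge> 2\<close>, a subgroup \<open>W < Z\<close> of order \<open>t\<close> gives the subgroup \<open>RW\<close> of
  order \<open>rt\<close>, which is neither incomparable (its order differs from \<open>|R|\<close>) nor above \<open>Z\<close>
  (as \<open>R \<inter> Z = 1\<close> would force \<open>Z \<subseteq> W\<close>).\<close>

lemma card_center_eq_prime: "card (center G) = t"
proof (rule ccontr)
  assume ne: "card (center G) \<noteq> t"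
  obtain c where c: "card (center G) = t ^ c" using center_power_of_other_prime by blast
  have "c \<noteq> 0" using c card_center_gt_1 by (metis power_0 less_irrefl)
  then obtain W where W: "subgroup W G" "W \<subseteq> center G" "card W = t"
    using exists_subgroup_of_prime_order[OF finite_carrier subgroup_center t(1) c] by auto
  have comm: "a \<otimes> b = b \<otimes> a" if "a \<in> R" "b \<in> W" for a b
    using that W(2) center_comm subgroup.subset[OF sR] by (metis subsetD)
  have sRW: "subgroup (R <#> W) G" using subgroup_set_mult_commuting[OF sR W(1) comm] .
  have RW: "R \<inter> W = {\<one>}"
    using sylow_inter_center W(2) subgroup.one_closed[OF sR] subgroup.one_closed[OF W(1)] by blast
  have card_RW: "card (R <#> W) = r * t"
    using card_set_mult[OF finite_carrier sR W(1) RW] card_sylow_eq_prime W(3) by simp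
  have R_RW: "R \<subseteq> R <#> W" using subset_set_mult_left[OF W(1) subgroup.subset[OF sR]] .
  have "\<not> R <#> W \<subseteq> center G" using R_RW R_inc unfolding center_incomparable_def by blast
  moreover have "\<not> center G \<subseteq> R <#> W"
  proof
    assume Z_RW: "center G \<subseteq> R <#> W"
    have "center G \<subseteq> W"
    proof
      fix z assume z: "z \<in> center G"
      then obtain a w where aw: "a \<in> R" "w \<in> W" "z = a \<otimes> w" using Z_RW mem_set_mult_iff by blast
      have c: "a \<in> carrier G" "w \<in> carrier G"
        using aw subgroup.subset[OF sR] subgroup.subset[OF W(1)] by auto
      have "a = z \<otimes> inv w" using aw c by simp
      moreover have "inv w \<in> center G"
        using aw(2) W(2) subgroup.m_inv_closed[OF subgroup_center] by blast
      ultimately have "a \<in> center G" using z subgroup.m_closed[OF subgroup_center] by simp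
      then have "a = \<one>" using aw(1) sylow_inter_center by blast
      then show "z \<in> W" using aw c by simp
    qed
    then have "center G = W" using W(2) by blast
    then show False using W(3) ne by simp
  qed
  ultimately have "R <#> W \<in> center_incomparable G" using center_incomparableI[OF sRW] by blast
  then have "card (R <#> W) = card R" using card_incomparable_eq R_inc by blast
  then show False
    using card_RW card_sylow_eq_prime prime_gt_1_nat[OF t(1)] prime_gt_0_nat[OF r] by simp
qed

end

lemma card_carrier_eq:
  assumes t: "Factorial_Ring.prime t" "t dvd card (rcosets (center G))" "t \<noteq> r"
  shows "card (carrier G) = r * t ^ multiplicity t (card (carrier G))"
    and "multiplicity t (card (carrier G)) \<ge> 2"
proof -
  have "p = r \<or> p = t" if p: "Factorial_Ring.prime p" "p dvd card (carrier G)" for p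
  proof (rule ccontr)
    assume pr: "\<not> (p = r \<or> p = t)"
    then have "\<not> p dvd card (center G)"
      using card_center_eq_prime[OF t] p(1) t(1) primes_dvd_imp_eq by metis
    then have "p dvd card (rcosets (center G))"
      using p card_index_center prime_dvd_mult_iff by metis
    then have "card (center G) = p" using card_center_eq_prime[OF p(1)] pr by blast
    then show False using card_center_eq_prime[OF t] pr by simp
  qed
  then have "card (carrier G)
      = r ^ multiplicity r (card (carrier G)) * t ^ multiplicity t (card (carrier G))"
    using two_prime_powers_if_prime_factors[OF card_carrier_pos r t(1)] t(3) by blast
  then show "card (carrier G) = r * t ^ multiplicity t (card (carrier G))"
    using card_R card_sylow_eq_prime[OF t] by simp
  have "multiplicity t (card (rcosets (center G))) > 0"
    using prime_multiplicity_gt_zero_iff[OF prime_imp_prime_elem[OF t(1)]] t(2) index_center_gt_1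
      by simp
  moreover have "multiplicity t (card (center G)) = 1"
    using card_center_eq_prime[OF t] t(1) by (simp add: prime_imp_prime_elem)
  ultimately show "multiplicity t (card (carrier G)) \<ge> 2"
    using multiplicity_card_carrier[OF t(1)] by simp
qed

end

lemma incomparable_prime_and_center_prime:
  obtains K r t where "K \<in> center_incomparable G" "Factorial_Ring.prime r" "Factorial_Ring.prime t"
    "r \<noteq> t"
    "card K = r" "card (center G) = t" "K \<inter> center G = {\<one>}"
    "card (carrier G) = r * t ^ multiplicity t (card (carrier G))"
    "multiplicity t (card (carrier G)) \<ge> 2"
proof -
  obtain r R where rR: "Factorial_Ring.prime r" "r dvd card (rcosets (center G))" "subgroup R G"
    "card R = r ^ multiplicity r (card (carrier G))" "R \<in> center_incomparable G"
    using exists_sylow_incomparable by blast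
  obtain t where t: "Factorial_Ring.prime t" "t dvd card (rcosets (center G))" "t \<noteq> r"
    using exists_other_prime_dvd_index[OF rR] by blast
  show thesis
    using that[OF rR(5) rR(1) t(1) t(3)[symmetric]] card_sylow_eq_prime[OF rR t] card_center_eq_prime[OF rR t]
      sylow_inter_center[OF rR t] card_carrier_eq[OF rR t] by blast
qed

end

section \<open>The decomposition \<open>G = KR\<close>\<close>

locale DD_decomposition = DD_group +
  fixes K R :: "'a set" and r t \<gamma> :: nat
  assumes K_inc: "K \<in> center_incomparable G" and r: "Factorial_Ring.prime r"
    and t: "Factorial_Ring.prime t" and r_ne_t: "r \<noteq> t"
    and card_K: "card K = r" and card_center: "card (center G) = t"
    and K_inter_center: "K \<inter> center G = {\<one>}"
    and card_carrier: "card (carrier G) = r * t ^ \<gamma>" and gamma_ge_2: "\<gamma> \<ge> 2"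
    and subgroup_R: "subgroup R G" and card_R: "card R = t ^ \<gamma>"
begin

lemma subgroup_K: "subgroup K G"
  using K_inc unfolding center_incomparable_def by blast

lemma K_not_central: "\<not> K \<subseteq> center G"
  using K_inc unfolding center_incomparable_def by blast

lemma K_carrier: "K \<subseteq> carrier G" and R_carrier: "R \<subseteq> carrier G"
  using subgroup_K subgroup_R subgroup.subset by auto

lemma r_gt_1: "r > 1" and t_gt_1: "t > 1"
  using prime_gt_1_nat r t by auto

lemma r_not_dvd_t_power: "\<not> r dvd t ^ k"
  using r t r_ne_t prime_dvd_power primes_dvd_imp_eq by metis

lemma t_subgroup_comparable:
  assumes "subgroup Y G" "card Y dvd t ^ k" shows "Y \<subseteq> center G \<or> center G \<subseteq> Y"
proof (rule ccontr)
  assume "\<not> ?thesis"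
  then have "Y \<in> center_incomparable G" using center_incomparableI assms(1) by blast
  then have "card Y = r" using card_incomparable_eq K_inc card_K by metis
  then show False using assms(2) r_not_dvd_t_power by simp
qed

lemma t_lt_card_R: "t < card R"
  using card_R gamma_ge_2 t_gt_1 power_strict_increasing_iff[of t 1 \<gamma>] by simp

lemma center_subset_R: "center G \<subseteq> R"
proof -
  have "\<not> R \<subseteq> center G"
    using card_mono[OF finite_center] t_lt_card_R card_center by (metis not_le)
  then show ?thesis using t_subgroup_comparable[OF subgroup_R, of \<gamma>] card_R by simp
qed

lemma R_ne_center: "R \<noteq> center G"
  using t_lt_card_R card_center by auto

definition KZ where "KZ = K <#> center G"

lemma subgroup_KZ: "subgroup KZ G"
  unfolding KZ_def using subgroup_set_mult_commuting[OF subgroup_K subgroup_center] center_comm K_carrier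
  by (metis subsetD)

lemma KZ_carrier: "KZ \<subseteq> carrier G"
  using subgroup_KZ subgroup.subset by blast

lemma card_KZ: "card KZ = r * t"
  unfolding KZ_def using card_set_mult[OF finite_carrier subgroup_K subgroup_center K_inter_center]
    card_K card_center by simp

lemma center_subset_KZ: "center G \<subseteq> KZ"
  unfolding KZ_def using subset_set_mult_right[OF subgroup_K] center_carrier by blast

lemma K_subset_KZ: "K \<subseteq> KZ"
  unfolding KZ_def using subset_set_mult_left[OF subgroup_center K_carrier] .

lemma KZ_comm: "a \<in> KZ \<Longrightarrow> b \<in> KZ \<Longrightarrow> a \<otimes> b = b \<otimes> a"
proof -
  obtain x where x: "x \<in> K" "x \<notin> center G" "generate G {x} = K"
    using incomparable_generator[OF K_inc] .
  have "x \<in> carrier G" using x K_carrier by auto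
  then show "a \<in> KZ \<Longrightarrow> b \<in> KZ \<Longrightarrow> a \<otimes> b = b \<otimes> a"
    unfolding KZ_def
      using commuting_set_mult_center[OF subgroup_K] cyclic_comm[OF finite_carrier] x(3) by blast
qed

lemma subgroup_between_center_and_rt:
  assumes A: "subgroup A G" "card A = r * t" and S: "subgroup S G" "center G \<subseteq> S" "S \<subseteq> A"
  shows "S = center G \<or> S = A"
proof -
  have "card S dvd r * t"
    using card_subgroup_dvd[OF S(1) A(1) S(3) subgroup_finite[OF A(1)]] A(2) by simp
  moreover obtain d where d: "card S = t * d"
    using card_subgroup_dvd[OF subgroup_center S(1,2) subgroup_finite[OF S(1)]] card_center by blast
  ultimately have "d dvd r" using t_gt_1 by (simp add: mult.commute)
  then consider "d = 1" | "d = r" using r prime_nat_iff by blast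
  then show ?thesis
  proof cases
    case 1
    then show ?thesis using d card_center card_subset_eq[OF subgroup_finite[OF S(1)] S(2)] by simp
  next
    case 2
    then show ?thesis
      using d A(2) card_subset_eq[OF subgroup_finite[OF A(1)] S(3)] by (simp add: mult.commute)
  qed
qed

definition KZ_conjugates where "KZ_conjugates = (\<lambda>g. conj_set G g KZ) ` carrier G"

lemma KZ_conjugate:
  assumes "A \<in> KZ_conjugates" shows "subgroup A G" "card A = r * t" "center G \<subseteq> A"
proof -
  obtain g where g: "g \<in> carrier G" "A = conj_set G g KZ"
    using assms unfolding KZ_conjugates_def by blast
  show "subgroup A G" "card A = r * t" "center G \<subseteq> A"
    using g subgroup_conj_set[OF subgroup_KZ g(1)] card_conj_set[OF g(1) KZ_carrier] card_KZ
      center_subset_conj_set_iff[OF g(1) KZ_carrier] center_subset_KZ by simp_all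
qed

lemma KZ_conjugates_inter:
  assumes A1: "A1 \<in> KZ_conjugates" and A2: "A2 \<in> KZ_conjugates" and ne: "A1 \<noteq> A2"
  shows "A1 \<inter> A2 = center G"
proof -
  have s: "subgroup (A1 \<inter> A2) G"
    using subgroups_Inter_pair[OF KZ_conjugate(1)[OF A1] KZ_conjugate(1)[OF A2]] .
  have Z: "center G \<subseteq> A1 \<inter> A2" using KZ_conjugate(3)[OF A1] KZ_conjugate(3)[OF A2] by blast
  have "A1 \<inter> A2 = center G \<or> A1 \<inter> A2 = A1"
    using subgroup_between_center_and_rt[OF KZ_conjugate(1,2)[OF A1] s Z] by blast
  moreover have "A1 \<inter> A2 = center G \<or> A1 \<inter> A2 = A2"
    using subgroup_between_center_and_rt[OF KZ_conjugate(1,2)[OF A2] s Z] by blast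
  ultimately show ?thesis using ne by blast
qed

lemma card_noncentral_KZ_conjugates:
  assumes self_norm: "normalizer G KZ = KZ"
  shows "card (\<Union>A\<in>KZ_conjugates. A - center G) + t ^ \<gamma> = card (carrier G)"
proof -
  have "card KZ_conjugates * card KZ = card (carrier G)"
    using card_conjugates_self_normalizing[OF subgroup_self subgroup_KZ KZ_carrier] self_norm
      normalizer_eq[OF KZ_carrier] unfolding KZ_conjugates_def by blast
  then have "r * (card KZ_conjugates * t) = r * t ^ \<gamma>"
    using card_KZ card_carrier by (simp add: ac_simps)
  then have conj_t: "card KZ_conjugates * t = t ^ \<gamma>" using r_gt_1 by simp
  have "finite KZ_conjugates" unfolding KZ_conjugates_def using finite_carrier by simp
  then have "card (\<Union>A\<in>KZ_conjugates. A - center G) = (\<Sum>A\<in>KZ_conjugates. card (A - center G))"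
    using KZ_conjugates_inter subgroup_finite[OF KZ_conjugate(1)] by (intro card_UN_disjoint) blast+
  also have "\<dots> = card KZ_conjugates * (r * t - t)"
    using card_Diff_subset[OF finite_center KZ_conjugate(3)] KZ_conjugate(2) card_center by simp
  also have "\<dots> = t ^ \<gamma> * (r - 1)" using conj_t by (simp add: algebra_simps diff_mult_distrib2)
  finally show ?thesis using card_carrier r_gt_1 by (simp add: algebra_simps diff_mult_distrib2)
qed

text \<open>Under self-normalization of \<open>KZ\<close>, the noncentral parts of its conjugates fill all of \<open>G\<close>
  except \<open>t^\<gamma>\<close> elements, and every conjugate of \<open>R\<close> has exactly those elements: so \<open>R\<close> is normal.\<close>

lemma conj_R_eq:
  assumes self_norm: "normalizer G KZ = KZ" and g: "g \<in> carrier G"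
  shows "conj_set G g R = carrier G - (\<Union>A\<in>KZ_conjugates. A - center G)"
proof -
  let ?R' = "conj_set G g R" and ?W = "\<Union>A\<in>KZ_conjugates. A - center G"
  have sR': "subgroup ?R' G" using subgroup_conj_set[OF subgroup_R g] .
  have card_R': "card ?R' = t ^ \<gamma>" using card_conj_set[OF g R_carrier] card_R by simp
  have ZR': "center G \<subseteq> ?R'"
    using center_subset_conj_set_iff[OF g R_carrier] center_subset_R by simp
  have "?R' \<inter> A = center G" if A: "A \<in> KZ_conjugates" for A
  proof -
    have "?R' \<inter> A \<noteq> A"
    proof
      assume "?R' \<inter> A = A"
      then have "A \<subseteq> ?R'" by blast
      then have "r * t dvd t ^ \<gamma>"
        using card_subgroup_dvd[OF KZ_conjugate(1)[OF A] sR' _ subgroup_finite[OF sR']] card_R'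
          KZ_conjugate(2)[OF A] by simp
      then show False using r_not_dvd_t_power dvd_mult_left by blast
    qed
    moreover have "center G \<subseteq> ?R' \<inter> A" using ZR' KZ_conjugate(3)[OF A] by blast
    ultimately show ?thesis
      using subgroup_between_center_and_rt[OF KZ_conjugate(1,2)[OF A] subgroups_Inter_pair[OF sR' KZ_conjugate(1)[OF A]]]
      by blast
  qed
  then have disj: "?R' \<inter> ?W = {}" by blast
  have W_carrier: "?W \<subseteq> carrier G"
    using KZ_conjugate(1) subgroup.subset by (intro UN_least) blast
  have "card (?R' \<union> ?W) = card (carrier G)"
    using card_Un_disjoint[OF subgroup_finite[OF sR'] finite_subset[OF W_carrier finite_carrier] disj]
      card_R' card_noncentral_KZ_conjugates[OF self_norm] by simp
  then have "?R' \<union> ?W = carrier G"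
    using card_subset_eq[OF finite_carrier Un_least[OF subgroup.subset[OF sR'] W_carrier]] by simp
  then show ?thesis using disj by blast
qed

lemma R_normal_if_KZ_self_normalizing:
  "normalizer G KZ = KZ \<Longrightarrow> g \<in> carrier G \<Longrightarrow> conj_set G g R = R"
  using conj_R_eq conj_R_eq[of \<one>] conj_set_one[OF R_carrier] by simp

lemma R_over_center_if_normal:
  assumes normal: "\<And>g. g \<in> carrier G \<Longrightarrow> conj_set G g R = R"
  shows "R \<in> nsn_over_center G"
proof (rule nsn_over_centerI[OF subgroup_R center_subset_R])
  show "\<not> R \<subseteq> center G" using center_subset_R R_ne_center by blast
  have "R \<noteq> carrier G"
  proof
    assume "R = carrier G"
    then show False using card_R card_carrier r_gt_1 t_gt_1 by simp
  qed
  moreover have "normalizer G R = carrier G" using normalizer_eq[OF R_carrier] normal by auto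
  ultimately show "normalizer G R \<noteq> R" by simp
qed

text \<open>By growth of normalizers in \<open>R\<close>, a subgroup strictly between \<open>Z\<close> and \<open>R\<close> would be a
  non-self-normalizing subgroup above the center of order dividing \<open>t^\<gamma>\<close>; but all of these have the
  order of \<open>KZ\<close> (divisible by \<open>r\<close>) or of \<open>R\<close>.\<close>

lemma no_subgroup_between_center_and_R:
  assumes Y: "subgroup Y G" "center G \<subseteq> Y" "Y \<noteq> center G" "Y \<subseteq> R"
  shows "Y = R"
proof (rule ccontr)
  assume YR: "Y \<noteq> R"
  obtain g where g: "g \<in> R" "g \<notin> Y" "conj_set G g Y = Y"
    using p_subgroup_normalizer_grows[OF finite_carrier subgroup_R t card_R Y(1,4) YR] by blast
  have "g \<in> normalizer G Y" using normalizer_eq[OF subgroup.subset[OF Y(1)]] g R_carrier by auto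
  then have Y_over: "Y \<in> nsn_over_center G"
    using nsn_over_centerI[OF Y(1,2)] Y(2,3) g(2) by blast
  have dvd_Y: "card Y dvd t ^ \<gamma>"
    using card_subgroup_dvd[OF Y(1) subgroup_R Y(4) subgroup_finite[OF subgroup_R]] card_R by simp
  show False
  proof (cases "normalizer G KZ = KZ")
    case False
    have "\<not> KZ \<subseteq> center G" using K_subset_KZ K_not_central by blast
    then have "KZ \<in> nsn_over_center G"
      using nsn_over_centerI[OF subgroup_KZ center_subset_KZ] False by blast
    then have "r * t dvd t ^ \<gamma>" using card_over_center_eq Y_over dvd_Y card_KZ by metis
    then show False using r_not_dvd_t_power dvd_mult_left by blast
  next
    case True
    then have "R \<in> nsn_over_center G"
      using R_over_center_if_normal R_normal_if_KZ_self_normalizing by blast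
    then have "card R = card Y" using card_over_center_eq Y_over by blast
    then show False using card_subset_eq[OF subgroup_finite[OF subgroup_R] Y(4)] YR by simp
  qed
qed

lemma R_generated:
  assumes y: "y \<in> R" "y \<notin> center G" shows "generate G {y} = R"
proof -
  have yc: "y \<in> carrier G" using y R_carrier by auto
  have sub: "generate G {y} \<subseteq> R" using cyclic_subset[OF subgroup_R y(1)] .
  have "card (generate G {y}) dvd t ^ \<gamma>"
    using card_subgroup_dvd[OF subgroup_cyclic[OF yc] subgroup_R sub subgroup_finite[OF subgroup_R]] card_R
      by simp
  then have "center G \<subseteq> generate G {y}"
    using t_subgroup_comparable[OF subgroup_cyclic[OF yc]] mem_cyclic[OF yc] y(2) by blast
  moreover have "generate G {y} \<noteq> center G" using mem_cyclic[OF yc] y(2) by blast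
  ultimately show ?thesis
    using no_subgroup_between_center_and_R[OF subgroup_cyclic[OF yc]] sub by blast
qed

lemma R_generator: obtains y where "y \<in> R" "y \<notin> center G" "generate G {y} = R"
  using center_subset_R R_ne_center R_generated by blast

text \<open>Otherwise the \<open>t\<close>-th power of a generator of \<open>R\<close> would generate a subgroup strictly between
  \<open>Z\<close> and \<open>R\<close>.\<close>

lemma gamma_eq_2: "\<gamma> = 2"
proof (rule ccontr)
  assume "\<gamma> \<noteq> 2"
  then have g3: "\<gamma> \<ge> 3" using gamma_ge_2 by simp
  obtain y where y: "y \<in> R" "y \<notin> center G" "generate G {y} = R" by (rule R_generator)
  have yc: "y \<in> carrier G" using y R_carrier by auto
  define w where "w = y [^] t"
  have wc: "w \<in> carrier G" unfolding w_def using yc by simp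
  have "ord y = t ^ \<gamma>" using card_cyclic[OF yc] y(3) card_R by simp
  then have cw: "card (generate G {w}) = t ^ (\<gamma> - 1)"
    using card_cyclic[OF wc] ord_pow_prime_power[OF yc t, of \<gamma> 1] gamma_ge_2 unfolding w_def by simp
  have wR: "generate G {w} \<subseteq> R"
    using cyclic_subset[OF subgroup_R subgroup_nat_pow_closed[OF subgroup_R y(1)]] unfolding w_def .
  have big: "t < t ^ (\<gamma> - 1)" using g3 t_gt_1 power_strict_increasing_iff[of t 1 "\<gamma> - 1"] by simp
  have "\<not> generate G {w} \<subseteq> center G"
    using card_mono[OF finite_center] cw card_center big by (metis not_le)
  then have "center G \<subseteq> generate G {w}"
    using t_subgroup_comparable[OF subgroup_cyclic[OF wc]]
      card_subgroup_dvd[OF subgroup_cyclic[OF wc] subgroup_R wR subgroup_finite[OF subgroup_R]] card_R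
        by metis
  moreover have "generate G {w} \<noteq> center G" using cw card_center big by auto
  moreover have "t ^ (\<gamma> - 1) < t ^ \<gamma>"
    using gamma_ge_2 t_gt_1 by (simp add: power_strict_increasing_iff)
  then have "generate G {w} \<noteq> R" using cw card_R by auto
  ultimately show False
    using no_subgroup_between_center_and_R[OF subgroup_cyclic[OF wc] _ _ wR] by blast
qed

lemma card_R_eq: "card R = t ^ 2" and card_carrier_eq: "card (carrier G) = r * t ^ 2"
  using card_R card_carrier gamma_eq_2 by simp_all

lemma K_inter_R: "K \<inter> R = {\<one>}"
  using inter_eq_one_if_coprime_card[OF finite_carrier subgroup_K subgroup_R] card_K card_R_eq
    primes_coprime[OF r t r_ne_t] by simp

lemma K_mult_R: "K <#> R = carrier G"
proof -
  have "card (K <#> R) = card (carrier G)"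
    using card_set_mult[OF finite_carrier subgroup_K subgroup_R K_inter_R] card_K card_R_eq card_carrier_eq
      by simp
  then show ?thesis
    using card_subset_eq[OF finite_carrier setmult_subset_G[OF K_carrier R_carrier]] by simp
qed

lemma R_comm: "a \<in> R \<Longrightarrow> b \<in> R \<Longrightarrow> a \<otimes> b = b \<otimes> a"
proof -
  obtain y where y: "y \<in> R" "y \<notin> center G" "generate G {y} = R" by (rule R_generator)
  then show "a \<in> R \<Longrightarrow> b \<in> R \<Longrightarrow> a \<otimes> b = b \<otimes> a"
    using cyclic_comm[OF finite_carrier, of y] R_carrier by blast
qed

lemma central_if_pow_t_eq_one:
  assumes u: "u \<in> R" "u [^] t = \<one>" shows "u \<in> center G"
proof -
  have uc: "u \<in> carrier G" using u R_carrier by auto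
  have sU: "subgroup (generate G {u}) G" using subgroup_cyclic[OF uc] .
  have "card (generate G {u}) \<le> t"
    using card_cyclic[OF uc] pow_eq_id[OF uc] u(2) t_gt_1 by (simp add: dvd_imp_le)
  moreover have "card (generate G {u}) dvd t ^ 2"
    using card_subgroup_dvd[OF sU subgroup_R cyclic_subset[OF subgroup_R u(1)] subgroup_finite[OF subgroup_R]]
      card_R_eq by simp
  moreover have "card (center G) \<le> card (generate G {u})" if "center G \<subseteq> generate G {u}"
    using card_mono[OF subgroup_finite[OF sU] that] .
  ultimately have "generate G {u} \<subseteq> center G"
    using t_subgroup_comparable[OF sU] card_subset_eq[OF subgroup_finite[OF sU]] card_center
    by (metis le_antisym order_refl)
  then show ?thesis using mem_cyclic[OF uc] by blast
qed

lemma pow_t_central: "y \<in> R \<Longrightarrow> y [^] t \<in> center G"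
proof -
  assume y: "y \<in> R"
  have yc: "y \<in> carrier G" using y R_carrier by auto
  have "ord y dvd card R"
    using card_subgroup_dvd[OF subgroup_cyclic[OF yc] subgroup_R cyclic_subset[OF subgroup_R y] subgroup_finite[OF subgroup_R]]
      card_cyclic[OF yc] by simp
  then have "(y [^] t) [^] t = \<one>"
    using pow_eq_id[OF yc] card_R_eq nat_pow_pow[OF yc] by (simp add: power2_eq_square)
  then show ?thesis using central_if_pow_t_eq_one subgroup_nat_pow_closed[OF subgroup_R y] by blast
qed

lemma central_if_commutes_with_generators:
  assumes x: "x \<in> K" "generate G {x} = K" and y: "y \<in> R" "generate G {y} = R"
    and comm: "x \<otimes> y = y \<otimes> x"
  shows "x \<in> center G"
proof -
  have xc: "x \<in> carrier G" and yc: "y \<in> carrier G" using x y K_carrier R_carrier by auto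
  have "x \<otimes> g = g \<otimes> x" if g: "g \<in> carrier G" for g
  proof -
    obtain a b where ab: "a \<in> K" "b \<in> R" "g = a \<otimes> b" using g K_mult_R mem_set_mult_iff by blast
    have abc: "a \<in> carrier G" "b \<in> carrier G" using ab K_carrier R_carrier by auto
    have xa: "x \<otimes> a = a \<otimes> x"
      using cyclic_comm[OF finite_carrier xc] x ab(1) mem_cyclic[OF xc] by metis
    have xb: "x \<otimes> b = b \<otimes> x"
      using cyclic_commute[OF finite_carrier yc xc comm[symmetric]] y ab(2) by metis
    have "x \<otimes> g = a \<otimes> (x \<otimes> b)" using ab abc xc xa by (simp flip: m_assoc)
    also have "\<dots> = g \<otimes> x" using ab abc xc xb by (simp add: m_assoc)
    finally show ?thesis .
  qed
  then show ?thesis using xc unfolding center_def by auto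
qed

lemma ord_K_generator: "x \<in> K \<Longrightarrow> generate G {x} = K \<Longrightarrow> ord x = r"
  using card_cyclic K_carrier card_K by (metis subsetD)

text \<open>If \<open>KZ\<close> were self-normalizing, \<open>R\<close> would be normal; a generator \<open>x\<close> of \<open>K\<close> would then
  conjugate a generator \<open>y\<close> of \<open>R\<close> to \<open>y u\<close> with \<open>u\<close> central of order dividing both \<open>t\<close> and
  \<open>r = ord x\<close>, so \<open>x\<close> would centralize \<open>R\<close> and hence be central.\<close>

lemma KZ_not_self_normalizing: "normalizer G KZ \<noteq> KZ"
proof
  assume self_norm: "normalizer G KZ = KZ"
  obtain x where x: "x \<in> K" "x \<notin> center G" "generate G {x} = K"
    by (rule incomparable_generator[OF K_inc])
  obtain y where y: "y \<in> R" "y \<notin> center G" "generate G {y} = R" by (rule R_generator)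
  have xc: "x \<in> carrier G" and yc: "y \<in> carrier G" using x y K_carrier R_carrier by auto
  define u where "u = inv y \<otimes> (x \<otimes> y \<otimes> inv x)"
  have y'R: "x \<otimes> y \<otimes> inv x \<in> R"
    using conj_set_memI[OF xc y(1)] R_normal_if_KZ_self_normalizing[OF self_norm xc] by simp
  have uR: "u \<in> R" unfolding u_def
    using subgroup.m_closed[OF subgroup_R subgroup.m_inv_closed[OF subgroup_R y(1)] y'R] .
  have uc: "u \<in> carrier G" using uR R_carrier by auto
  have "(x \<otimes> y \<otimes> inv x) [^] t = y [^] t"
    using pow_conj[OF xc yc] center_comm[OF pow_t_central[OF y(1)] xc] xc yc
    by (metis inv_mult_cancel_right nat_pow_closed)
  then have "u [^] t = \<one>" unfolding u_def
    using pow_mult_distrib[OF R_comm[OF subgroup.m_inv_closed[OF subgroup_R y(1)] y'R]] yc y'R R_carrier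
    by (auto simp: nat_pow_inv)
  then have uZ: "u \<in> center G" using central_if_pow_t_eq_one[OF uR] by blast
  have conj: "x \<otimes> y \<otimes> inv x = y \<otimes> u" unfolding u_def using xc yc by (simp flip: m_assoc)
  have "y = y \<otimes> u [^] r"
    using conj_pow_eq_mult_central_pow[OF xc yc uZ conj, of r] ord_K_generator[OF x(1,3)] pow_ord_eq_1[OF xc] yc
    by simp
  then have "ord u dvd r" using pow_eq_id[OF uc] yc uc by (metis l_cancel_one' nat_pow_closed)
  moreover have "ord u dvd t" using pow_eq_id[OF uc] \<open>u [^] t = \<one>\<close> by simp
  ultimately have "ord u = 1"
    using primes_coprime[OF r t r_ne_t] coprime_common_divisor_nat by blast
  then have "x \<otimes> y \<otimes> inv x = y" using conj ord_eq_1[OF uc] yc by simp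
  then have "x \<otimes> y = y \<otimes> x" using xc yc by (metis m_closed mult_inv_cancel_right)
  then show False using central_if_commutes_with_generators[OF x(1,3) y(1,3)] x(2) by blast
qed

lemma KZ_normalizer: "normalizer G KZ = carrier G"
proof -
  let ?N = "normalizer G KZ"
  have sN: "subgroup ?N G" using normalizer_imp_subgroup[OF KZ_carrier] .
  have KZ_N: "KZ \<subseteq> ?N" using subgroup_subset_normalizer[OF subgroup_KZ] .
  have "card ?N dvd r * t * t"
    using card_subgroup_dvd[OF sN subgroup_self subgroup.subset[OF sN] finite_carrier] card_carrier_eq
    by (simp add: power2_eq_square mult.assoc)
  moreover have "r * t dvd card ?N"
    using card_subgroup_dvd[OF subgroup_KZ sN KZ_N subgroup_finite[OF sN]] card_KZ by simp
  then obtain d where d: "card ?N = r * t * d" by (rule dvdE)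
  ultimately have "d dvd t" using r_gt_1 t_gt_1 by simp
  then consider "d = 1" | "d = t" using t prime_nat_iff by blast
  then show ?thesis
  proof cases
    case 1
    then have "?N = KZ" using d card_KZ card_subset_eq[OF subgroup_finite[OF sN] KZ_N] by simp
    then show ?thesis using KZ_not_self_normalizing by blast
  next
    case 2
    then have "card ?N = card (carrier G)"
      using d card_carrier_eq by (simp add: power2_eq_square mult.assoc)
    then show ?thesis using card_subset_eq[OF finite_carrier subgroup.subset[OF sN]] by simp
  qed
qed

text \<open>A conjugate \<open>K' \<noteq> K\<close> would lie in the abelian normal subgroup \<open>KZ\<close>, making \<open>KK'\<close> a subgroup
  of order \<open>r^2\<close> in \<open>KZ\<close> of order \<open>rt\<close>.\<close>

lemma conj_set_K: "g \<in> carrier G \<Longrightarrow> conj_set G g K = K"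
proof (rule ccontr)
  let ?K' = "conj_set G g K"
  assume g: "g \<in> carrier G" and ne: "?K' \<noteq> K"
  have sK': "subgroup ?K' G" using subgroup_conj_set[OF subgroup_K g] .
  have card_K': "card ?K' = r" using card_conj_set[OF g K_carrier] card_K by simp
  have "conj_set G g KZ = KZ" using KZ_normalizer g normalizer_eq[OF KZ_carrier] by blast
  then have K'_KZ: "?K' \<subseteq> KZ" using conj_set_mono[OF K_subset_KZ, of g] by simp
  have KK': "K \<inter> ?K' = {\<one>}"
    using inter_eq_one_if_prime_card[OF finite_carrier r subgroup_K sK' card_K card_K'] ne by blast
  have comm: "a \<otimes> b = b \<otimes> a" if "a \<in> K" "b \<in> ?K'" for a b
    using KZ_comm[of a b] K_subset_KZ K'_KZ that by (meson subsetD)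
  have sKK': "subgroup (K <#> ?K') G" using subgroup_set_mult_commuting[OF subgroup_K sK' comm] .
  have "K <#> ?K' \<subseteq> KZ"
  proof
    fix u assume "u \<in> K <#> ?K'"
    then obtain a b where "a \<in> K" "b \<in> ?K'" "u = a \<otimes> b" using mem_set_mult_iff by blast
    then show "u \<in> KZ" using K_subset_KZ K'_KZ subgroup.m_closed[OF subgroup_KZ] by (meson subsetD)
  qed
  then have "card (K <#> ?K') dvd r * t"
    using card_subgroup_dvd[OF sKK' subgroup_KZ _ subgroup_finite[OF subgroup_KZ]] card_KZ by simp
  then have "r * r dvd r * t"
    using card_set_mult[OF finite_carrier subgroup_K sK' KK'] card_K card_K' by simp
  then have "r dvd t ^ 1" using r_gt_1 by simp
  then show False using r_not_dvd_t_power by blast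
qed

lemma K_normal: "K \<lhd> G"
proof (rule normal_invI[OF subgroup_K])
  fix g h assume "g \<in> carrier G" "h \<in> K"
  then show "g \<otimes> h \<otimes> inv g \<in> K" using conj_set_memI[of g h K] conj_set_K[of g] by simp
qed

lemma centralizer_eq_center: "centralizer_in G R K = center G"
proof
  show "center G \<subseteq> centralizer_in G R K"
    unfolding centralizer_in_def using center_subset_R center_comm K_carrier by blast
  show "centralizer_in G R K \<subseteq> center G"
  proof
    fix h assume "h \<in> centralizer_in G R K"
    then have h: "h \<in> R" "\<And>k. k \<in> K \<Longrightarrow> h \<otimes> k = k \<otimes> h" unfolding centralizer_in_def by auto
    show "h \<in> center G"
    proof (rule ccontr)
      assume hZ: "h \<notin> center G"
      obtain x where x: "x \<in> K" "x \<notin> center G" "generate G {x} = K"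
        by (rule incomparable_generator[OF K_inc])
      have "x \<in> center G"
        using central_if_commutes_with_generators[OF x(1,3) h(1) R_generated[OF h(1) hZ]] h(2)[OF x(1)]
          by simp
      then show False using x(2) by simp
    qed
  qed
qed

lemma R_cyclic: "cyclic_group (G\<lparr>carrier := R\<rparr>)"
proof -
  obtain y where y: "y \<in> R" "y \<notin> center G" "generate G {y} = R" by (rule R_generator)
  have "generate (G\<lparr>carrier := R\<rparr>) {y} = R"
    using generate_consistent[of "{y}" R] y subgroup_R by simp
  then have "subgroup_generated (G\<lparr>carrier := R\<rparr>) {y} = G\<lparr>carrier := R\<rparr>"
    unfolding subgroup_generated_def using y(1) by (simp add: Int_absorb1)
  then show ?thesis unfolding cyclic_group_def using y(1) by auto
qed

text \<open>A generator \<open>y\<close> of \<open>R\<close> acts on \<open>K = \<langle>x\<rangle>\<close> by \<open>x \<mapsto> x^k\<close>; as \<open>y^t\<close> is central, \<open>k^t \<equiv> 1\<close>,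
  and by Fermat \<open>k^(r-1) \<equiv> 1 (mod r)\<close>. Were \<open>t\<close> prime to \<open>r - 1\<close>, then \<open>k \<equiv> 1\<close>, i.e. \<open>y\<close> would
  centralize \<open>K\<close>.\<close>

lemma t_dvd_r_minus_1: "t dvd r - 1"
proof (rule ccontr)
  assume nd: "\<not> t dvd r - 1"
  obtain x where x: "x \<in> K" "x \<notin> center G" "generate G {x} = K"
    by (rule incomparable_generator[OF K_inc])
  obtain y where y: "y \<in> R" "y \<notin> center G" "generate G {y} = R" by (rule R_generator)
  have xc: "x \<in> carrier G" and yc: "y \<in> carrier G" using x y K_carrier R_carrier by auto
  have ox: "ord x = r" using ord_K_generator[OF x(1,3)] .
  have "y \<otimes> x \<otimes> inv y \<in> K" using conj_set_memI[OF yc x(1)] conj_set_K[OF yc] by simp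
  then obtain k :: nat where k: "y \<otimes> x \<otimes> inv y = x [^] k"
    using cyclic_eq_powers[OF finite_carrier xc] x(3) by auto
  have "y [^] t \<otimes> x \<otimes> inv (y [^] t) = x"
    using center_comm[OF pow_t_central[OF y(1)] xc] xc yc
      by (metis inv_mult_cancel_right nat_pow_closed)
  then have "x [^] (k ^ t) = x [^] (1::nat)" using conj_pow_eq_pow_pow[OF xc yc k, of t] xc by simp
  then have kt: "[k ^ t = 1] (mod r)" using pow_eq_iff_cong[OF xc ox] by blast
  have "\<not> r dvd k"
  proof
    assume "r dvd k"
    then have "y \<otimes> x \<otimes> inv y = \<one>" using k pow_eq_id[OF xc] ox by simp
    moreover have "x = inv y \<otimes> (y \<otimes> x \<otimes> inv y) \<otimes> y" using xc yc by (simp add: m_assoc)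
    ultimately have "x = \<one>" using yc by simp
    then show False using x(2) subgroup.one_closed[OF subgroup_center] by simp
  qed
  then have "[k ^ (r - 1) = 1] (mod r)" using fermat_theorem[OF r] by blast
  then have "[k = 1] (mod r)"
    using cong_one_if_pow_cong_one_coprime[OF kt] prime_imp_coprime[OF t nd] by blast
  then have "y \<otimes> x \<otimes> inv y = x" using k pow_eq_iff_cong[OF xc ox, of k 1] xc by simp
  then have "y \<otimes> x = x \<otimes> y" using xc yc by (metis m_closed mult_inv_cancel_right)
  then have "x \<in> center G" using central_if_commutes_with_generators[OF x(1,3) y(1,3)] by simp
  then show False using x(2) by simp
qed

end

theorem mainTheorem12:
  fixes G (structure)
  assumes "group G" and "finite (carrier G)"
    and "int (DD G) - int (DD (G\<lparr>carrier := center G\<rparr>)) = 3"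
    and "DD (G Mod center G) = 1"
  shows "\<exists>K H p q. K \<lhd> G \<and> Factorial_Ring.prime (p::nat) \<and> card K = p
          \<and> subgroup H G \<and> cyclic_group (G\<lparr>carrier := H\<rparr>) \<and> Factorial_Ring.prime (q::nat) \<and> card H = q ^ 2
          \<and> q dvd p - 1 \<and> K \<inter> H = {\<one>} \<and> K <#> H = carrier G
          \<and> centralizer_in G H K = center G \<and> card (center G) = q"
proof -
  have DD: "DD_group G" using assms by (simp add: DD_group_def DD_group_axioms_def)
  then interpret DD_group G .
  obtain K r t where K: "K \<in> center_incomparable G" "Factorial_Ring.prime r" "Factorial_Ring.prime t"
    "r \<noteq> t" "card K = r" "card (center G) = t" "K \<inter> center G = {\<one>}"
    "card (carrier G) = r * t ^ multiplicity t (card (carrier G))"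
    "multiplicity t (card (carrier G)) \<ge> 2"
    by (rule incomparable_prime_and_center_prime)
  obtain R where R: "subgroup R G" "card R = t ^ multiplicity t (card (carrier G))"
    by (rule exists_sylow[OF K(3)])
  interpret DD_decomposition G K R r t "multiplicity t (card (carrier G))"
    using DD K R by (simp add: DD_decomposition_def DD_decomposition_axioms_def)
  show ?thesis
    using K_normal r card_K subgroup_R R_cyclic t card_R_eq t_dvd_r_minus_1 K_inter_R K_mult_R
      centralizer_eq_center card_center by blast
qed

end
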